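(* Let $X\ge H_2\ge H_1\ge X^{1/4}\ge2$. (i) $\max_{a,q\in\mathbb N}\Big|\frac{1}{H_1}\sum_{X<n\le X+H_1,\ n\equiv a\ (q)}\Lambda^\sharp(n)-\frac{1}{H_2}\sum_{X<n\le X+H_2,\ n\equiv a\ (q)}\Lambda^\sharp(n)\Big|\ll\exp(-(\log X)^{1/10})$. (ii) Let $k\ge2$. Then $\max_{a,q\in\mathbb N}\Big|\frac{1}{H_1}\sum_{X<n\le X+H_1,\ n\equiv a\ (q)}d_k^\sharp(n)-\frac{1}{H_2}\sum_{X<n\le X+H_2,\ n\equiv a\ (q)}d_k^\sharp(n)\Big|\ll X^{-1/100}+\frac{H_2}{X}\log^{k-2}X$.
   Context: With $P(w)=\prod_{p<w}p$, $R=\exp((\log X)^{1/10})$, $\Lambda^\sharp(n)=\frac{P(R)}{\varphi(P(R))}1_{(n,P(R))=1}$. With $R_k=X^{1/(10k)}$, $d_k^\sharp(n)=\sum_{m\le R_k^{2k-2},\,m\mid n}P_m(\log n)$ where $P_m(t)=\sum_{j=0}^{k-1}\binom{k}{j}\sum_{n_1,\dots,n_j\le R_k<n_{j+1},\dots,n_{k-1}\le R_k^2,\ n_1\cdots n_{k-1}=m}\frac{(t-\log(n_1\cdots n_jR_k^{k-j}))^{k-j-1}}{(k-j-1)!\log^{k-j-1}R_k}$. Implied constants may depend on $k$. *)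

theory Defs
  imports "HOL-Number_Theory.Number_Theory" "HOL-Library.FuncSet"
begin

definition primorial_lt :: "real \<Rightarrow> nat" where
  "primorial_lt w = \<Prod>{p::nat. prime p \<and> real p < w}"

definition R_sharp :: "real \<Rightarrow> real" where
  "R_sharp X = exp (ln X powr (1/10))"

definition Lambda_sharp :: "real \<Rightarrow> nat \<Rightarrow> real" where
  "Lambda_sharp X n =
     (if coprime n (primorial_lt (R_sharp X))
      then real (primorial_lt (R_sharp X)) / real (totient (primorial_lt (R_sharp X)))
      else 0)"

definition R_k :: "nat \<Rightarrow> real \<Rightarrow> real" where
  "R_k k X = X powr (1 / (10 * real k))"

text \<open>P_m(t); tuples (n_1,...,n_{k-1}) are indexed by 0..k-2 (n_{i+1} = ns i)\<close>
definition P_poly :: "nat \<Rightarrow> real \<Rightarrow> nat \<Rightarrow> real \<Rightarrow> real" where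
  "P_poly k X m t =
     (\<Sum>j = 0..k-1. real (k choose j) *
        (\<Sum>ns \<in> {ns \<in> {0..<k-1} \<rightarrow>\<^sub>E {1..m}.
                    (\<Prod>i<k-1. ns i) = m \<and>
                    (\<forall>i<j. real (ns i) \<le> R_k k X) \<and>
                    (\<forall>i\<in>{j..<k-1}. R_k k X < real (ns i) \<and> real (ns i) \<le> (R_k k X)^2)}.
           (t - ln ((\<Prod>i<j. real (ns i)) * (R_k k X) ^ (k - j))) ^ (k - j - 1)
           / (fact (k - j - 1) * (ln (R_k k X)) ^ (k - j - 1))))"

definition dk_sharp :: "nat \<Rightarrow> real \<Rightarrow> nat \<Rightarrow> real" where
  "dk_sharp k X n =
     (\<Sum>m \<in> {m::nat. 1 \<le> m \<and> real m \<le> (R_k k X) ^ (2*k - 2) \<and> m dvd n}.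
        P_poly k X m (ln (real n)))"

definition win_avg :: "(nat \<Rightarrow> real) \<Rightarrow> real \<Rightarrow> real \<Rightarrow> nat \<Rightarrow> nat \<Rightarrow> real" where
  "win_avg f X H a q =
     (1 / H) * (\<Sum>n \<in> {n::nat. X < real n \<and> real n \<le> X + H \<and> [n = a] (mod q)}. f n)"

end

(*
  Lambda_sharp is P/phi(P) times the indicator of (n, P) = 1, where P is the product of the
  primes below R = exp((log X)^(1/10)).  Truncating inclusion-exclusion over the prime divisors
  of (n, P) at level K = 8 ceil(log R) approximates this indicator pointwise by the sum of mu(d)
  over d | (n, P) with omega(d) <= K, with an error bounded by the number of d | (n, P) with
  omega(d) = K + 1.  In the window (X, X + H] and the class a mod q each d has H rho(d) + O(1)
  multiples, so after dividing by H the main terms for H1 and H2 coincide.  What remains is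
  R^O(K) / H1, negligible because H1 >= X^(1/4) = exp((log R)^10 / 4), and the Rankin tail
  2^(-K) prod_(p < R) (1 + 2/p) << 2^(-K) R^2 = O(1/R).

  d_k_sharp(n) is the sum of P_m(log n) over m | n with m <= R_k^(2k-2), and P_m is a polynomial
  whose size and Lipschitz constant on [0, 2 log X] are bounded by a weight W(m) counting
  factorisations of m.  On the window log n = log X + O(H2/X), so m contributes
  rho(m) P_m(log X) to both normalised averages up to O(W(m)/H1 + W(m) H2 / (m X log X)).
  Summing over m, sum W(m) << R_k^(2k-2) <= X^(1/5) and sum W(m)/m << (log X)^(k-1).
*)

theory Submission
  imports Defs
begin

section \<open>Multiples in short arithmetic progressions\<close>

definition ap_window :: "real \<Rightarrow> real \<Rightarrow> nat \<Rightarrow> nat \<Rightarrow> nat set" where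
  "ap_window x H a q = {n. x < real n \<and> real n \<le> x + H \<and> [n = a] (mod q)}"

definition dvd_density :: "nat \<Rightarrow> nat \<Rightarrow> nat \<Rightarrow> real" where
  "dvd_density q a m = (if \<exists>n. [n = a] (mod q) \<and> m dvd n then 1 / real (lcm q m) else 0)"

lemma win_avg_ap_window: "win_avg f X H a q = (1 / H) * (\<Sum>n\<in>ap_window X H a q. f n)"
  unfolding win_avg_def ap_window_def ..

lemma nat_real_le_eq_lessThan: "{t::nat. real t \<le> z} = {..<nat (\<lfloor>z\<rfloor> + 1)}"
proof -
  have "real t \<le> z \<longleftrightarrow> t < nat (\<lfloor>z\<rfloor> + 1)" for t :: nat
  proof -
    have "real t \<le> z \<longleftrightarrow> int t \<le> \<lfloor>z\<rfloor>"
      by (metis le_floor_iff of_int_of_nat_eq)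
    also have "\<dots> \<longleftrightarrow> t < nat (\<lfloor>z\<rfloor> + 1)" by linarith
    finally show ?thesis .
  qed
  then show ?thesis by auto
qed

lemma finite_nat_real_le: "finite {t::nat. real t \<le> z}"
  by (simp add: nat_real_le_eq_lessThan)

lemma finite_ap_window: "finite (ap_window x H a q)"
  by (rule finite_subset[OF _ finite_nat_real_le[of "x + H"]]) (auto simp: ap_window_def)

lemma card_window_mod:
  fixes L r :: nat and x H :: real
  assumes L: "L \<ge> 1" and r: "r < L" and x: "x \<ge> 0" and H: "H \<ge> 0"
  shows "\<bar>real (card {n::nat. x < real n \<and> real n \<le> x + H \<and> n mod L = r}) - H / L\<bar> \<le> 1"
proof -
  define a where "a = (x - r) / L"
  define b where "b = (x + H - r) / L"
  have Lp: "real L > 0" using L by simp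
  have ab: "a \<le> b" unfolding a_def b_def using H Lp by (simp add: divide_right_mono)
  have am: "a > -1" unfolding a_def using r x Lp by (simp add: field_simps)
  have ba: "b - a = H / L" unfolding a_def b_def using Lp by (simp add: field_simps)
  define T where "T = {t::nat. a < real t \<and> real t \<le> b}"
  have image: "{n::nat. x < real n \<and> real n \<le> x + H \<and> n mod L = r} = (\<lambda>t. r + L * t) ` T"
  proof (rule equalityI; rule subsetI)
    fix n assume "n \<in> {n::nat. x < real n \<and> real n \<le> x + H \<and> n mod L = r}"
    then have n: "x < real n" "real n \<le> x + H" "n mod L = r" by auto
    have nd: "n = r + L * (n div L)"
      using n(3) div_mult_mod_eq[of n L] by (simp add: mult.commute add.commute)
    have rn: "real n = r + L * real (n div L)" using arg_cong[OF nd, of real] by simp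
    have "a < real (n div L)" unfolding a_def using n(1) rn Lp by (simp add: field_simps)
    moreover have "real (n div L) \<le> b" unfolding b_def using n(2) rn Lp by (simp add: field_simps)
    ultimately show "n \<in> (\<lambda>t. r + L * t) ` T" unfolding T_def using nd by blast
  next
    fix n assume "n \<in> (\<lambda>t. r + L * t) ` T"
    then obtain t where t: "a < real t" "real t \<le> b" "n = r + L * t" unfolding T_def by auto
    have "x < real n" using t(1,3) Lp unfolding a_def by (simp add: field_simps)
    moreover have "real n \<le> x + H" using t(2,3) Lp unfolding b_def by (simp add: field_simps)
    moreover have "n mod L = r" using t(3) r by simp
    ultimately show "n \<in> {n::nat. x < real n \<and> real n \<le> x + H \<and> n mod L = r}" by simp
  qed
  have inj: "inj_on (\<lambda>t. r + L * t) T" using L by (auto simp: inj_on_def)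
  have T_diff: "T = {t::nat. real t \<le> b} - {t::nat. real t \<le> a}" unfolding T_def by auto
  have sub: "{t::nat. real t \<le> a} \<subseteq> {t::nat. real t \<le> b}" using ab by auto
  have "card T = nat (\<lfloor>b\<rfloor> + 1) - nat (\<lfloor>a\<rfloor> + 1)"
    unfolding T_diff by (simp add: card_Diff_subset[OF finite_nat_real_le sub] nat_real_le_eq_lessThan)
  moreover have "\<lfloor>a\<rfloor> \<ge> -1" "\<lfloor>a\<rfloor> \<le> \<lfloor>b\<rfloor>" using am ab floor_mono by (linarith, blast)
  ultimately have "real (card T) = real_of_int (\<lfloor>b\<rfloor> - \<lfloor>a\<rfloor>)" by simp
  then have "\<bar>real (card T) - (b - a)\<bar> \<le> 1"
    using of_int_floor_le[of a] of_int_floor_le[of b]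
      real_of_int_floor_gt_diff_one[of a] real_of_int_floor_gt_diff_one[of b] by linarith
  then show ?thesis using image card_image[OF inj] ba by simp
qed

lemma card_ap_window_dvd:
  fixes q m a :: nat
  assumes q: "q \<ge> 1" and m: "m \<ge> 1" and x: "x \<ge> 0" and H: "H \<ge> 0"
  shows "\<bar>real (card {n \<in> ap_window x H a q. m dvd n}) - dvd_density q a m * H\<bar> \<le> 1"
proof (cases "\<exists>n0. [n0 = a] (mod q) \<and> m dvd n0")
  case True
  then obtain n0 where n0: "[n0 = a] (mod q)" "m dvd n0" by blast
  define L where "L = lcm q m"
  have L1: "L \<ge> 1" using q m unfolding L_def by (simp add: lcm_pos_nat Suc_le_eq)
  have "([n = a] (mod q) \<and> m dvd n) \<longleftrightarrow> n mod L = n0 mod L" for n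
  proof
    assume h: "[n = a] (mod q) \<and> m dvd n"
    have "[n = n0] (mod q)" using h n0 by (meson cong_sym cong_trans)
    moreover have "[n = n0] (mod m)" using h n0 by (simp add: cong_def)
    ultimately have "[n = n0] (mod L)" unfolding L_def by (rule cong_cong_lcm_nat)
    then show "n mod L = n0 mod L" by (simp add: cong_def)
  next
    assume "n mod L = n0 mod L"
    then have c: "[n = n0] (mod L)" by (simp add: cong_def)
    have "[n = n0] (mod q)" using cong_dvd_modulus_nat[OF c] unfolding L_def by simp
    then have "[n = a] (mod q)" using n0 by (meson cong_trans)
    moreover have "[n = n0] (mod m)" using cong_dvd_modulus_nat[OF c] unfolding L_def by simp
    then have "m dvd n" using n0 cong_dvd_iff by blast
    ultimately show "[n = a] (mod q) \<and> m dvd n" by simp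
  qed
  then have "{n \<in> ap_window x H a q. m dvd n} = {n. x < real n \<and> real n \<le> x + H \<and> n mod L = n0 mod L}"
    unfolding ap_window_def by blast
  moreover have "dvd_density q a m = 1 / real L" using True unfolding dvd_density_def L_def by simp
  ultimately show ?thesis using card_window_mod[OF L1 _ x H, of "n0 mod L"] L1 by simp
next
  case False
  then have "{n \<in> ap_window x H a q. m dvd n} = {}" unfolding ap_window_def by blast
  then have "card {n \<in> ap_window x H a q. m dvd n} = 0" by (metis card.empty)
  moreover have "dvd_density q a m = 0" using False unfolding dvd_density_def by auto
  ultimately show ?thesis by simp
qed

lemma dvd_density_nonneg: "dvd_density q a m \<ge> 0"
  unfolding dvd_density_def by simp

lemma dvd_density_le:
  assumes "q \<ge> 1" "m \<ge> 1"
  shows "dvd_density q a m \<le> 1 / real m"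
proof -
  have "m \<le> lcm q m" using assms by (simp add: dvd_imp_le lcm_pos_nat)
  then show ?thesis unfolding dvd_density_def using assms by (simp add: frac_le)
qed

section \<open>Brun's pure sieve in short progressions\<close>

lemma sum_alternating_choose_atMost:
  assumes "m \<ge> 1"
  shows "(\<Sum>i\<le>K. (-1::real) ^ i * real (m choose i)) = (-1) ^ K * real ((m - 1) choose K)"
proof (induction K)
  case 0 then show ?case by simp
next
  case (Suc K)
  obtain m' where m': "m = Suc m'" using assms by (cases m) auto
  have "(m choose Suc K) = (m' choose K) + (m' choose Suc K)" using m' by simp
  then show ?case using Suc m' by (simp add: algebra_simps)
qed

lemma sum_subsets_card_le_minus_one_pow:
  assumes "finite S"
  shows "(\<Sum>B | B \<subseteq> S \<and> card B \<le> K. (-1::real) ^ card B) = (\<Sum>i\<le>K. (-1) ^ i * real (card S choose i))"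
proof -
  have eq: "{B. B \<subseteq> S \<and> card B \<le> K} = (\<Union>i\<in>{..K}. {B. B \<subseteq> S \<and> card B = i})" by auto
  have "(\<Sum>B | B \<subseteq> S \<and> card B \<le> K. (-1::real) ^ card B)
      = (\<Sum>i\<le>K. \<Sum>B | B \<subseteq> S \<and> card B = i. (-1::real) ^ card B)"
    unfolding eq by (rule sum.UNION_disjoint) (use assms in auto)
  also have "\<dots> = (\<Sum>i\<le>K. \<Sum>B | B \<subseteq> S \<and> card B = i. (-1::real) ^ i)"
    by (intro sum.cong) auto
  also have "\<dots> = (\<Sum>i\<le>K. (-1) ^ i * real (card S choose i))"
    using n_subsets[OF assms] by (simp add: mult.commute)
  finally show ?thesis .
qed

lemma truncated_inclusion_exclusion:
  assumes "finite D"
  shows "\<bar>(if D = {} then 1 else 0) - (\<Sum>B | B \<subseteq> D \<and> card B \<le> K. (-1::real) ^ card B)\<bar>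
         \<le> real (card {B. B \<subseteq> D \<and> card B = Suc K})"
proof (cases "D = {}")
  case True
  then have "{B. B \<subseteq> D \<and> card B \<le> K} = {{}}" by auto
  then show ?thesis using True by simp
next
  case False
  then obtain m where m: "card D = Suc m" using assms by (cases "card D") auto
  have "\<bar>(if D = {} then 1 else 0) - (\<Sum>B | B \<subseteq> D \<and> card B \<le> K. (-1::real) ^ card B)\<bar>
      = real (m choose K)"
    using False m sum_subsets_card_le_minus_one_pow[OF assms, of K]
      sum_alternating_choose_atMost[of "card D" K] by (simp add: abs_mult)
  also have "\<dots> \<le> real (card D choose Suc K)" using m by simp
  also have "\<dots> = real (card {B. B \<subseteq> D \<and> card B = Suc K})" using n_subsets[OF assms] by simp
  finally show ?thesis .
qed

lemma card_subsets_card_le: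
  assumes "finite A"
  shows "card {B. B \<subseteq> A \<and> card B \<le> j} \<le> (card A + 1) ^ j"
proof (induction j)
  case 0
  have "{B. B \<subseteq> A \<and> card B \<le> 0} = {{}}" using assms by (auto simp: card_eq_0_iff dest: finite_subset)
  then show ?case by simp
next
  case (Suc j)
  define S where "S = {B. B \<subseteq> A \<and> card B \<le> j}"
  have finS: "finite S" using assms unfolding S_def by auto
  have cover: "{B. B \<subseteq> A \<and> card B \<le> Suc j} \<subseteq> S \<union> (\<Union>a\<in>A. insert a ` S)"
  proof
    fix B assume B: "B \<in> {B. B \<subseteq> A \<and> card B \<le> Suc j}"
    show "B \<in> S \<union> (\<Union>a\<in>A. insert a ` S)"
    proof (cases "card B \<le> j")
      case True then show ?thesis using B unfolding S_def by auto
    next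
      case False
      then obtain a where a: "a \<in> B" by fastforce
      have "finite B" using B assms finite_subset by blast
      then have "B - {a} \<in> S" using B False a unfolding S_def by auto
      moreover have "B = insert a (B - {a})" using a by auto
      ultimately show ?thesis using B a by blast
    qed
  qed
  have "card (\<Union>a\<in>A. insert a ` S) \<le> (\<Sum>a\<in>A. card (insert a ` S))"
    by (rule card_UN_le[OF assms])
  also have "\<dots> \<le> (\<Sum>a\<in>A. card S)" by (intro sum_mono card_image_le finS)
  finally have UN: "card (\<Union>a\<in>A. insert a ` S) \<le> card A * card S" by simp
  have "card {B. B \<subseteq> A \<and> card B \<le> Suc j} \<le> card (S \<union> (\<Union>a\<in>A. insert a ` S))"
    using cover by (rule card_mono[rotated]) (use assms finS in auto)
  also have "\<dots> \<le> card S + card (\<Union>a\<in>A. insert a ` S)" by (rule card_Un_le)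
  also have "\<dots> \<le> (card A + 1) * card S" using UN by simp
  also have "\<dots> \<le> (card A + 1) * (card A + 1) ^ j" using Suc unfolding S_def by (rule mult_left_mono) simp
  also have "\<dots> = (card A + 1) ^ Suc j" by simp
  finally show ?case .
qed

lemma card_subsets_truncation_le:
  assumes "finite A"
  shows "real (card {B. B \<subseteq> A \<and> card B \<le> K}) + real (card {B. B \<subseteq> A \<and> card B = Suc K})
         \<le> 2 * real (card A + 1) ^ Suc K"
proof -
  define F where "F = {B. B \<subseteq> A \<and> card B \<le> Suc K}"
  have "finite F" using assms unfolding F_def by auto
  moreover have "{B. B \<subseteq> A \<and> card B \<le> K} \<subseteq> F" "{B. B \<subseteq> A \<and> card B = Suc K} \<subseteq> F"
    unfolding F_def by auto
  ultimately have "card {B. B \<subseteq> A \<and> card B \<le> K} \<le> card F" "card {B. B \<subseteq> A \<and> card B = Suc K} \<le> card F"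
    by (blast intro: card_mono)+
  moreover have "card F \<le> (card A + 1) ^ Suc K" unfolding F_def by (rule card_subsets_card_le[OF assms])
  ultimately have "card {B. B \<subseteq> A \<and> card B \<le> K} + card {B. B \<subseteq> A \<and> card B = Suc K}
      \<le> 2 * (card A + 1) ^ Suc K" by linarith
  then have "real (card {B. B \<subseteq> A \<and> card B \<le> K} + card {B. B \<subseteq> A \<and> card B = Suc K})
      \<le> real (2 * (card A + 1) ^ Suc K)" by (simp only: of_nat_le_iff)
  then show ?thesis by (simp only: of_nat_add of_nat_mult of_nat_power of_nat_numeral of_nat_1)
qed

text \<open>Rankin's trick: each subset of size \<open>j\<close> is weighted by \<open>2\<^sup>j\<close> and the sum is then
  completed to all subsets.\<close>
lemma rankin_subsets_card:
  fixes A :: "nat set"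
  assumes "finite A" "\<And>p. p \<in> A \<Longrightarrow> p > 0"
  shows "(\<Sum>B | B \<subseteq> A \<and> card B = j. 1 / real (\<Prod>B)) \<le> (1/2) ^ j * (\<Prod>p\<in>A. 1 + 2 / real p)"
proof -
  have "(\<Sum>B | B \<subseteq> A \<and> card B = j. 1 / real (\<Prod>B))
      = (\<Sum>B | B \<subseteq> A \<and> card B = j. (1/2) ^ j * (\<Prod>p\<in>B. 2 / real p))"
  proof (intro sum.cong refl)
    fix B assume B: "B \<in> {B. B \<subseteq> A \<and> card B = j}"
    have "(\<Prod>p\<in>B. 2 / real p) = 2 ^ card B / (\<Prod>p\<in>B. real p)" by (simp add: prod_dividef)
    then show "1 / real (\<Prod>B) = (1/2) ^ j * (\<Prod>p\<in>B. 2 / real p)" using B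
      by (simp add: power_one_over)
  qed
  also have "\<dots> = (1/2) ^ j * (\<Sum>B | B \<subseteq> A \<and> card B = j. \<Prod>p\<in>B. 2 / real p)"
    by (simp add: sum_distrib_left)
  also have "\<dots> \<le> (1/2) ^ j * (\<Sum>B\<in>Pow A. \<Prod>p\<in>B. 2 / real p)"
    by (intro mult_left_mono sum_mono2) (use assms in \<open>auto intro: prod_nonneg\<close>)
  also have "(\<Sum>B\<in>Pow A. \<Prod>p\<in>B. 2 / real p) = (\<Prod>p\<in>A. 2 / real p + 1)"
    using prod_add[OF assms(1), of "\<lambda>p. 2 / real p" "\<lambda>p. 1"] by simp
  finally show ?thesis by (simp add: add.commute)
qed

lemma coprime_prod_primes_iff:
  fixes A :: "nat set"
  assumes "finite A" "\<And>p. p \<in> A \<Longrightarrow> prime p"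
  shows "coprime n (\<Prod>A) \<longleftrightarrow> {p\<in>A. p dvd n} = {}"
proof
  assume c: "coprime n (\<Prod>A)"
  show "{p\<in>A. p dvd n} = {}"
  proof (rule ccontr)
    assume "{p\<in>A. p dvd n} \<noteq> {}"
    then obtain p where p: "p \<in> A" "p dvd n" by auto
    have "p dvd \<Prod>A" using dvd_prodI[of A p "\<lambda>x. x"] p assms by simp
    then have "is_unit p" using c p by (meson coprime_common_divisor)
    then show False using assms(2)[OF p(1)] by (simp add: not_prime_unit)
  qed
next
  assume e: "{p\<in>A. p dvd n} = {}"
  show "coprime n (\<Prod>A)"
  proof (rule prod_coprime_right)
    fix p assume "p \<in> A"
    then have "prime p" "\<not> p dvd n" using e assms by auto
    then show "coprime n p" using prime_imp_coprime coprime_commute by blast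
  qed
qed

lemma prod_primes_dvd_iff:
  fixes B :: "nat set"
  assumes "finite B" "\<And>p. p \<in> B \<Longrightarrow> prime p"
  shows "(\<Prod>B) dvd n \<longleftrightarrow> (\<forall>p\<in>B. p dvd n)"
  using assms
proof (induction B rule: finite_induct)
  case empty then show ?case by simp
next
  case (insert p B)
  have "coprime p (\<Prod>B)"
  proof (rule prod_coprime_right)
    fix r assume "r \<in> B"
    then have "prime p" "prime r" "r \<noteq> p" using insert.prems insert.hyps(2) by auto
    then show "coprime p r" by (simp add: primes_coprime)
  qed
  moreover have "\<Prod>(insert p B) = p * \<Prod>B" using insert by simp
  ultimately show ?case using insert
    by (metis divides_mult dvd_mult_left dvd_mult_right insert_iff)
qed

lemma coprime_prod_primes_truncated_sieve:
  fixes A :: "nat set"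
  assumes A: "finite A" "\<And>p. p \<in> A \<Longrightarrow> prime p"
  shows "\<bar>(if coprime n (\<Prod>A) then 1 else 0)
           - (\<Sum>B | B \<subseteq> A \<and> card B \<le> K. if \<Prod>B dvd n then (-1::real) ^ card B else 0)\<bar>
         \<le> (\<Sum>B | B \<subseteq> A \<and> card B = Suc K. if \<Prod>B dvd n then 1 else 0)"
proof -
  define D where "D = {p\<in>A. p dvd n}"
  have fD: "finite D" using A unfolding D_def by auto
  have dvd_iff: "\<Prod>B dvd n \<longleftrightarrow> B \<subseteq> D" if "B \<subseteq> A" for B
    using prod_primes_dvd_iff[of B n] that A finite_subset unfolding D_def by blast
  have filter: "{B \<in> {B. B \<subseteq> A \<and> P B}. \<Prod>B dvd n} = {B. B \<subseteq> D \<and> P B}" for P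
    using dvd_iff unfolding D_def by auto
  have fin: "finite {B. B \<subseteq> A \<and> P B}" for P
    using A(1) by (auto intro: finite_subset[of _ "Pow A"])
  have "(\<Sum>B | B \<subseteq> A \<and> card B \<le> K. if \<Prod>B dvd n then (-1::real) ^ card B else 0)
      = (\<Sum>B | B \<subseteq> D \<and> card B \<le> K. (-1::real) ^ card B)"
    by (simp only: sum.inter_filter[OF fin, symmetric] filter)
  moreover have "(\<Sum>B | B \<subseteq> A \<and> card B = Suc K. if \<Prod>B dvd n then 1 else (0::real))
      = real (card {B. B \<subseteq> D \<and> card B = Suc K})"
    by (simp only: sum.inter_filter[OF fin, symmetric] filter) simp
  moreover have "coprime n (\<Prod>A) \<longleftrightarrow> D = {}"
    unfolding D_def by (rule coprime_prod_primes_iff[OF A])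
  ultimately show ?thesis using truncated_inclusion_exclusion[OF fD, of K] by simp
qed

lemma abs_sum_signed_approx_le_card:
  fixes s N c :: "'b \<Rightarrow> real"
  assumes "\<And>B. B \<in> G \<Longrightarrow> \<bar>s B\<bar> \<le> 1" "\<And>B. B \<in> G \<Longrightarrow> \<bar>N B - c B * H\<bar> \<le> 1"
  shows "\<bar>(\<Sum>B\<in>G. s B * N B) - H * (\<Sum>B\<in>G. s B * c B)\<bar> \<le> real (card G)"
proof -
  have "\<bar>(\<Sum>B\<in>G. s B * N B) - H * (\<Sum>B\<in>G. s B * c B)\<bar> = \<bar>\<Sum>B\<in>G. s B * (N B - c B * H)\<bar>"
    by (simp add: sum_distrib_left sum_subtractf[symmetric] algebra_simps)
  also have "\<dots> \<le> (\<Sum>B\<in>G. \<bar>s B\<bar> * \<bar>N B - c B * H\<bar>)"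
    using sum_abs[of "\<lambda>B. s B * (N B - c B * H)" G] by (simp add: abs_mult)
  also have "\<dots> \<le> (\<Sum>B\<in>G. 1 * 1)"
    using assms by (intro sum_mono mult_mono) auto
  finally show ?thesis by simp
qed

lemma window_average_sieve_approx:
  fixes f :: "nat \<Rightarrow> real" and s c u :: "'b \<Rightarrow> real" and ind :: "'b \<Rightarrow> nat \<Rightarrow> bool"
  assumes fin: "finite W" "finite G" "finite E"
    and s: "\<And>B. B \<in> G \<Longrightarrow> \<bar>s B\<bar> \<le> 1"
    and pointwise: "\<And>n. n \<in> W \<Longrightarrow>
      \<bar>f n - (\<Sum>B\<in>G. if ind B n then s B else 0)\<bar> \<le> (\<Sum>B\<in>E. if ind B n then 1 else 0)"
    and count: "\<And>B. B \<in> G \<union> E \<Longrightarrow> \<bar>real (card {n\<in>W. ind B n}) - c B * H\<bar> \<le> 1"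
    and cu: "\<And>B. B \<in> E \<Longrightarrow> c B \<le> u B"
    and H: "H > 0"
  shows "\<bar>(1/H) * (\<Sum>n\<in>W. f n) - (\<Sum>B\<in>G. s B * c B)\<bar>
         \<le> (real (card G) + real (card E)) / H + (\<Sum>B\<in>E. u B)"
proof -
  define N where "N B = real (card {n\<in>W. ind B n})" for B
  have ind_sum: "(\<Sum>n\<in>W. if ind B n then v else 0) = v * N B" for B v
    using sum.inter_filter[OF fin(1), of "\<lambda>_. v" "ind B"] by (simp add: N_def mult.commute)
  have "\<bar>(\<Sum>n\<in>W. f n) - (\<Sum>n\<in>W. \<Sum>B\<in>G. if ind B n then s B else 0)\<bar>
       \<le> (\<Sum>n\<in>W. \<bar>f n - (\<Sum>B\<in>G. if ind B n then s B else 0)\<bar>)"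
    by (subst sum_subtractf[symmetric]) (rule sum_abs)
  also have "\<dots> \<le> (\<Sum>n\<in>W. \<Sum>B\<in>E. if ind B n then 1 else 0)" by (intro sum_mono pointwise)
  finally have sieve: "\<bar>(\<Sum>n\<in>W. f n) - (\<Sum>B\<in>G. s B * N B)\<bar> \<le> (\<Sum>B\<in>E. N B)"
    by (subst (asm) (1 2) sum.swap) (simp add: ind_sum)
  have main: "\<bar>(\<Sum>B\<in>G. s B * N B) - H * (\<Sum>B\<in>G. s B * c B)\<bar> \<le> real (card G)"
    using s count unfolding N_def by (intro abs_sum_signed_approx_le_card) auto
  have "(\<Sum>B\<in>E. N B) \<le> (\<Sum>B\<in>E. u B * H + 1)"
  proof (intro sum_mono)
    fix B assume B: "B \<in> E"
    have "N B \<le> c B * H + 1" using count[of B] B unfolding N_def by auto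
    also have "\<dots> \<le> u B * H + 1" using cu[OF B] H by (simp add: mult_right_mono)
    finally show "N B \<le> u B * H + 1" .
  qed
  also have "\<dots> = H * (\<Sum>B\<in>E. u B) + real (card E)"
    by (simp add: sum.distrib sum_distrib_left mult.commute)
  finally have "\<bar>(\<Sum>n\<in>W. f n) - H * (\<Sum>B\<in>G. s B * c B)\<bar>
      \<le> real (card G) + real (card E) + H * (\<Sum>B\<in>E. u B)"
    using sieve main by linarith
  then have "\<bar>(\<Sum>n\<in>W. f n) - H * (\<Sum>B\<in>G. s B * c B)\<bar> / H
      \<le> (real (card G) + real (card E) + H * (\<Sum>B\<in>E. u B)) / H"
    using H by (simp add: divide_right_mono)
  then show ?thesis using H by (simp add: abs_div_pos diff_divide_distrib add_divide_distrib)
qed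

lemma coprime_window_approx:
  fixes A :: "nat set"
  assumes A: "finite A" "\<And>p. p \<in> A \<Longrightarrow> prime p"
    and q: "q \<ge> 1" and x: "x \<ge> 0" and H: "H > 0"
  shows "\<bar>(1/H) * (\<Sum>n\<in>ap_window x H a q. if coprime n (\<Prod>A) then 1 else 0)
           - (\<Sum>B | B \<subseteq> A \<and> card B \<le> K. (-1) ^ card B * dvd_density q a (\<Prod>B))\<bar>
         \<le> 2 * real (card A + 1) ^ Suc K / H + (1/2) ^ Suc K * (\<Prod>p\<in>A. 1 + 2 / real p)"
proof -
  define G where "G = {B. B \<subseteq> A \<and> card B \<le> K}"
  define E where "E = {B. B \<subseteq> A \<and> card B = Suc K}"
  have fin: "finite G" "finite E" using A(1) unfolding G_def E_def by auto
  have prod_ge_1: "\<Prod>B \<ge> 1" if "B \<subseteq> A" for B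
  proof -
    have "\<Prod>B > 0" using that A finite_subset[OF that] by (intro prod_pos) (auto simp: prime_gt_0_nat)
    then show ?thesis by simp
  qed
  have approx: "\<bar>(1/H) * (\<Sum>n\<in>ap_window x H a q. if coprime n (\<Prod>A) then 1 else 0)
           - (\<Sum>B\<in>G. (-1) ^ card B * dvd_density q a (\<Prod>B))\<bar>
        \<le> (real (card G) + real (card E)) / H + (\<Sum>B\<in>E. 1 / real (\<Prod>B))"
  proof (rule window_average_sieve_approx[OF finite_ap_window fin(1,2), where ind = "\<lambda>B n. \<Prod>B dvd n"])
    fix n show "\<bar>(if coprime n (\<Prod>A) then 1 else 0) - (\<Sum>B\<in>G. if \<Prod>B dvd n then (-1::real) ^ card B else 0)\<bar>
        \<le> (\<Sum>B\<in>E. if \<Prod>B dvd n then 1 else 0)"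
      unfolding G_def E_def by (rule coprime_prod_primes_truncated_sieve[OF A])
  next
    fix B assume "B \<in> G \<union> E"
    then have "\<Prod>B \<ge> 1" using prod_ge_1 unfolding G_def E_def by blast
    then show "\<bar>real (card {n \<in> ap_window x H a q. \<Prod>B dvd n}) - dvd_density q a (\<Prod>B) * H\<bar> \<le> 1"
      using card_ap_window_dvd q x H by simp
  next
    fix B assume "B \<in> E"
    then have "\<Prod>B \<ge> 1" using prod_ge_1 unfolding E_def by blast
    then show "dvd_density q a (\<Prod>B) \<le> 1 / real (\<Prod>B)" by (rule dvd_density_le[OF q])
  qed (simp_all add: H)
  have "real (card G) + real (card E) \<le> 2 * real (card A + 1) ^ Suc K"
    unfolding G_def E_def by (rule card_subsets_truncation_le[OF A(1)])
  then have "(real (card G) + real (card E)) / H \<le> 2 * real (card A + 1) ^ Suc K / H"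
    using H by (simp add: divide_right_mono)
  moreover have "(\<Sum>B\<in>E. 1 / real (\<Prod>B)) \<le> (1/2) ^ Suc K * (\<Prod>p\<in>A. 1 + 2 / real p)"
    unfolding E_def using A by (intro rankin_subsets_card) (auto simp: prime_gt_0_nat)
  ultimately show ?thesis using approx unfolding G_def by linarith
qed

lemma prod_subset_atLeastAtMost_le:
  fixes g :: "nat \<Rightarrow> real"
  assumes "A \<subseteq> {2..N}" "\<And>n. n \<in> {2..N} \<Longrightarrow> g n \<ge> 1"
  shows "(\<Prod>p\<in>A. g p) \<le> (\<Prod>n\<in>{2..N}. g n)"
proof (rule prod_mono2)
  fix p assume "p \<in> A"
  then show "0 \<le> g p" using assms by (meson dual_order.trans subsetD zero_le_one)
qed (use assms in auto)

lemma prod_one_plus_two_div_le: "(\<Prod>n\<in>{2..N}. 1 + 2 / real n) \<le> (real N + 1) ^ 2"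
proof (cases "N = 0")
  case False
  have "(\<Prod>n\<in>{2..N}. 1 + 2 / real n) = (real N + 1) * (real N + 2) / 6" if "N \<ge> 1" for N
    using that
  proof (induction N rule: dec_induct)
    case base then show ?case by simp
  next
    case (step N)
    then have "{2..Suc N} = insert (Suc N) {2..N}" by auto
    then show ?case using step by (simp add: field_simps)
  qed
  also have "(real N + 1) * (real N + 2) / 6 \<le> (real N + 1) ^ 2" by (simp add: power2_eq_square field_simps)
  finally show ?thesis using False by simp
qed simp

lemma coprime_window_avg_diff:
  fixes A :: "nat set"
  assumes A: "A \<subseteq> {2..N}" "\<And>p. p \<in> A \<Longrightarrow> prime p"
    and q: "q \<ge> 1" and x: "x \<ge> 0" and H: "0 < H1" "H1 \<le> H2"
  shows "\<bar>(1/H1) * (\<Sum>n\<in>ap_window x H1 a q. if coprime n (\<Prod>A) then 1 else 0)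
           - (1/H2) * (\<Sum>n\<in>ap_window x H2 a q. if coprime n (\<Prod>A) then 1 else 0)\<bar>
         \<le> 4 * (real N + 1) ^ Suc K / H1 + 2 * ((1/2) ^ Suc K * (real N + 1) ^ 2)"
proof -
  have finA: "finite A" using A(1) finite_subset by blast
  define main where "main = (\<Sum>B | B \<subseteq> A \<and> card B \<le> K. (-1) ^ card B * dvd_density q a (\<Prod>B))"
  define e where "e = 2 * (real N + 1) ^ Suc K / H1 + (1/2) ^ Suc K * (real N + 1) ^ 2"
  have approx: "\<bar>(1/H) * (\<Sum>n\<in>ap_window x H a q. if coprime n (\<Prod>A) then 1 else 0) - main\<bar> \<le> e"
    if "H1 \<le> H" for H
  proof -
    have "card A \<le> N" using card_mono[OF _ A(1)] by simp
    then have "2 * real (card A + 1) ^ Suc K / H \<le> 2 * (real N + 1) ^ Suc K / H1"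
      using H that by (intro frac_le mult_left_mono power_mono) auto
    moreover have "(\<Prod>p\<in>A. 1 + 2 / real p) \<le> (real N + 1) ^ 2"
      using prod_subset_atLeastAtMost_le[OF A(1), of "\<lambda>p. 1 + 2 / real p"] prod_one_plus_two_div_le[of N]
      by simp
    then have "(1/2) ^ Suc K * (\<Prod>p\<in>A. 1 + 2 / real p) \<le> (1/2) ^ Suc K * (real N + 1) ^ 2"
      by (rule mult_left_mono) simp
    ultimately show ?thesis
      using coprime_window_approx[OF finA A(2) q x, where H=H and K=K and a=a] H that unfolding main_def e_def
      by linarith
  qed
  have "\<bar>(1/H1) * (\<Sum>n\<in>ap_window x H1 a q. if coprime n (\<Prod>A) then 1 else 0)
           - (1/H2) * (\<Sum>n\<in>ap_window x H2 a q. if coprime n (\<Prod>A) then 1 else 0)\<bar> \<le> 2 * e"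
    using approx[of H1] approx[of H2] H by linarith
  then show ?thesis unfolding e_def by simp
qed

section \<open>Averages of \<open>Lambda_sharp\<close>\<close>

lemma prod_ratio_pred_telescope: "(\<Prod>n\<in>{2..N}. real n / (real n - 1)) = max 1 (real N)"
proof (induction N)
  case 0 then show ?case by simp
next
  case (Suc N)
  show ?case
  proof (cases "N = 0")
    case True then show ?thesis by simp
  next
    case False
    then have "{2..Suc N} = insert (Suc N) {2..N}" by auto
    then show ?thesis using Suc False by simp
  qed
qed

lemma totient_prod_primes:
  fixes A :: "nat set"
  assumes "finite A" "\<And>p. p \<in> A \<Longrightarrow> prime p"
  shows "real (\<Prod>A) / real (totient (\<Prod>A)) = (\<Prod>p\<in>A. real p / (real p - 1))"
proof -
  have "totient (\<Prod>A) = (\<Prod>p\<in>A. totient p)"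
    using totient_prod_coprime[of id A] assms by (simp add: pairwise_def primes_coprime)
  also have "\<dots> = (\<Prod>p\<in>A. p - 1)" using assms by (intro prod.cong) (auto simp: totient_prime)
  finally have "real (totient (\<Prod>A)) = (\<Prod>p\<in>A. real p - 1)"
    using assms prime_ge_1_nat by (simp add: of_nat_prod of_nat_diff cong: prod.cong)
  then show ?thesis by (simp add: of_nat_prod prod_dividef)
qed

definition primes_below :: "real \<Rightarrow> nat set" where
  "primes_below R = {p. prime p \<and> real p < R}"

lemma primes_below_subset: "primes_below R \<subseteq> {2..nat \<lceil>R\<rceil>}"
proof
  fix p assume "p \<in> primes_below R"
  then have p: "prime p" "real p < R" unfolding primes_below_def by auto
  then have "p \<le> nat \<lceil>R\<rceil>" by linarith
  then show "p \<in> {2..nat \<lceil>R\<rceil>}" using prime_ge_2_nat[OF p(1)] by simp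
qed

lemma finite_primes_below: "finite (primes_below R)"
  using primes_below_subset finite_subset by blast

lemma prime_primes_below: "p \<in> primes_below R \<Longrightarrow> prime p"
  unfolding primes_below_def by simp

lemma primorial_lt_eq_prod: "primorial_lt R = \<Prod>(primes_below R)"
  unfolding primorial_lt_def primes_below_def ..

lemma Lambda_sharp_eq:
  "Lambda_sharp X n = (\<Prod>p\<in>primes_below (R_sharp X). real p / (real p - 1))
     * (if coprime n (\<Prod>(primes_below (R_sharp X))) then 1 else 0)"
  unfolding Lambda_sharp_def primorial_lt_eq_prod
  using totient_prod_primes[OF finite_primes_below prime_primes_below] by simp

lemma prod_ratio_primes_below_le:
  "(\<Prod>p\<in>primes_below R. real p / (real p - 1)) \<le> real (nat \<lceil>R\<rceil>) + 1"
proof -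
  have "(\<Prod>p\<in>primes_below R. real p / (real p - 1)) \<le> (\<Prod>n\<in>{2..nat \<lceil>R\<rceil>}. real n / (real n - 1))"
    by (rule prod_subset_atLeastAtMost_le[OF primes_below_subset]) auto
  then show ?thesis unfolding prod_ratio_pred_telescope by simp
qed

lemma quadratic_le_tenth_power:
  fixes L :: real assumes L0: "L \<ge> 0"
  shows "8 * L^2 + 27 * L + 20 \<le> L^10 / 4 + 106"
proof (cases "L \<le> 2")
  case True
  have "L^2 \<le> 4" using power_mono[of L 2 2] True L0 by simp
  moreover have "L^10 \<ge> 0" using L0 by simp
  ultimately show ?thesis using True by linarith
next
  case False
  have "L^8 \<ge> 2^8" using False L0 by (intro power_mono) auto
  then have "L^8 * L^2 \<ge> 256 * L^2" by (intro mult_right_mono) auto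
  moreover have "L^10 = L^8 * L^2" by (simp flip: power_add)
  moreover have "L^2 \<ge> 4" using power_mono[of 2 L 2] False by simp
  moreover have "L \<le> L^2 / 2" using False by (simp add: power2_eq_square)
  ultimately show ?thesis by linarith
qed

lemma sieve_level_term_le:
  fixes L Y H :: real and M :: nat
  assumes L: "L \<ge> 0" "real M \<le> L + 1" and Y: "0 \<le> Y" "Y \<le> 3 * exp L" and H: "exp (L ^ 10 / 4) \<le> H"
  shows "4 * Y ^ (8 * M + 2) / H \<le> 4 * exp 106 * exp (- L)"
proof -
  have "3 \<le> exp (2::real)" using exp_ge_add_one_self[of 2] by simp
  then have "Y \<le> exp (L + 2)" using Y by (simp add: exp_add) (metis mult.commute mult_right_mono exp_ge_zero order_trans)
  then have "Y ^ (8 * M + 2) \<le> exp (L + 2) ^ (8 * M + 2)" using Y by (intro power_mono) auto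
  also have "\<dots> = exp ((L + 2) * real (8 * M + 2))" by (metis exp_of_nat_mult mult.commute)
  also have "\<dots> \<le> exp ((L + 2) * (8 * L + 10))" using L by (intro exp_mono mult_left_mono) auto
  also have "\<dots> \<le> exp (L ^ 10 / 4 + 106 - L)"
    using quadratic_le_tenth_power[OF L(1)] by (intro exp_mono) (simp add: algebra_simps power2_eq_square)
  also have "\<dots> = exp (L ^ 10 / 4) * (exp 106 * exp (- L))" by (simp add: exp_add[symmetric] exp_diff)
  finally have "Y ^ (8 * M + 2) \<le> exp (L ^ 10 / 4) * (exp 106 * exp (- L))" .
  then have "4 * Y ^ (8 * M + 2) / H \<le> 4 * (exp (L ^ 10 / 4) * (exp 106 * exp (- L))) / exp (L ^ 10 / 4)"
    using H Y(1) by (intro divide_mono mult_left_mono) auto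
  then show ?thesis by simp
qed

lemma rankin_tail_term_le:
  fixes L Y :: real and M :: nat
  assumes L: "L \<le> real M" and Y: "0 \<le> Y" "Y \<le> 3 * exp L"
  shows "(1/2) ^ (8 * M) * Y ^ 3 \<le> 27 * exp (- L)"
proof -
  have "exp (1::real) ^ 4 \<le> 3 ^ 4" using exp_le by (intro power_mono) auto
  then have "exp (4::real) ^ M \<le> 256 ^ M" by (intro power_mono) (auto simp: exp_of_nat_mult[symmetric])
  moreover have "(256::real) ^ M = 2 ^ (8 * M)" by (simp add: power_mult)
  moreover have "exp (4::real) ^ M = exp (4 * real M)" by (metis exp_of_nat_mult mult.commute)
  ultimately have "exp (4 * real M) \<le> 2 ^ (8 * M)" by simp
  then have "(1/2::real) ^ (8 * M) \<le> exp (- 4 * real M)"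
    by (simp add: power_one_over exp_minus field_simps)
  also have "\<dots> \<le> exp (- 4 * L)" using L by simp
  finally have "(1/2::real) ^ (8 * M) \<le> exp (- 4 * L)" .
  moreover have "Y ^ 3 \<le> (3 * exp L) ^ 3" using Y by (intro power_mono) auto
  moreover have "(3 * exp L) ^ 3 = 27 * exp (3 * L)" by (simp add: power_mult_distrib exp_of_nat_mult[symmetric])
  ultimately have "(1/2) ^ (8 * M) * Y ^ 3 \<le> exp (- 4 * L) * (27 * exp (3 * L))"
    using Y by (metis mult_mono exp_ge_zero zero_le_power)
  also have "\<dots> = 27 * exp (- L)" by (simp add: exp_add[symmetric])
  finally show ?thesis .
qed

lemma X_powr_quarter_eq:
  fixes X :: real assumes "X > 1"
  shows "X powr (1/4) = exp ((ln X powr (1/10)) ^ 10 / 4)"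
proof -
  have "(ln X powr (1/10)) ^ 10 = ln X"
    using assms by (simp add: powr_realpow[symmetric] powr_powr)
  then show ?thesis using assms by (simp add: powr_def)
qed

lemma Lambda_sharp_window_diff:
  fixes X H1 H2 :: real
  assumes X: "X > 1" and H: "X powr (1/4) \<le> H1" "H1 \<le> H2" and q: "q \<ge> 1"
  shows "\<bar>win_avg (Lambda_sharp X) X H1 a q - win_avg (Lambda_sharp X) X H2 a q\<bar>
           \<le> (4 * exp 106 + 27) * exp (- (ln X powr (1/10)))"
proof -
  define L where "L = ln X powr (1/10)"
  define A where "A = primes_below (R_sharp X)"
  define V where "V = (\<Prod>p\<in>A. real p / (real p - 1))"
  define N where "N = nat \<lceil>R_sharp X\<rceil>"
  define M where "M = nat \<lceil>L\<rceil>"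
  define Y where "Y = real N + 1"
  define avg where "avg H = (1/H) * (\<Sum>n\<in>ap_window X H a q. if coprime n (\<Prod>A) then 1 else 0)" for H
  have L: "L \<ge> 0" "L \<le> real M" "real M \<le> L + 1" unfolding M_def L_def by auto
  have "X powr (1/4) > 0" using X by simp
  then have H1: "H1 > 0" "exp (L ^ 10 / 4) \<le> H1"
    using H(1) X_powr_quarter_eq[OF X] unfolding L_def by linarith+
  have R: "R_sharp X = exp L" unfolding R_sharp_def L_def ..
  have V: "0 \<le> V" "V \<le> Y"
    unfolding V_def Y_def N_def A_def using prod_ratio_primes_below_le
    by (auto intro!: prod_nonneg dest!: prime_primes_below prime_gt_1_nat)
  have "exp L \<ge> 1" using L(1) by simp
  then have Y: "0 \<le> Y" "Y \<le> 3 * exp L" unfolding Y_def N_def R by linarith+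
  have "win_avg (Lambda_sharp X) X H a q = V * avg H" for H
    unfolding win_avg_ap_window Lambda_sharp_eq avg_def V_def A_def by (simp add: sum_distrib_left)
  then have "\<bar>win_avg (Lambda_sharp X) X H1 a q - win_avg (Lambda_sharp X) X H2 a q\<bar> = V * \<bar>avg H1 - avg H2\<bar>"
    using V(1) by (simp add: abs_mult flip: right_diff_distrib)
  also have "\<dots> \<le> Y * (4 * Y ^ Suc (8 * M) / H1 + 2 * ((1/2) ^ Suc (8 * M) * Y ^ 2))"
    using coprime_window_avg_diff[OF primes_below_subset prime_primes_below q _ H1(1) H(2)] X V
    unfolding avg_def A_def Y_def N_def by (intro mult_mono) auto
  also have "\<dots> = 4 * Y ^ (8 * M + 2) / H1 + (1/2) ^ (8 * M) * Y ^ 3"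
    by (simp add: field_simps power_add power2_eq_square power3_eq_cube)
  also have "\<dots> \<le> 4 * exp 106 * exp (- L) + 27 * exp (- L)"
    using sieve_level_term_le[OF L(1,3) Y H1(2)] rankin_tail_term_le[OF L(2) Y] by (rule add_mono)
  finally show ?thesis unfolding L_def by (simp add: algebra_simps)
qed

section \<open>Averages of \<open>dk_sharp\<close>\<close>

definition divisor_tuples :: "nat \<Rightarrow> real \<Rightarrow> nat \<Rightarrow> nat \<Rightarrow> (nat \<Rightarrow> nat) set" where
  "divisor_tuples k R j m = {ns \<in> {0..<k-1} \<rightarrow>\<^sub>E {1..m}.
     (\<Prod>i<k-1. ns i) = m \<and> (\<forall>i<j. real (ns i) \<le> R) \<and>
     (\<forall>i\<in>{j..<k-1}. R < real (ns i) \<and> real (ns i) \<le> R^2)}"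

definition tuple_term :: "nat \<Rightarrow> real \<Rightarrow> nat \<Rightarrow> (nat \<Rightarrow> nat) \<Rightarrow> real \<Rightarrow> real" where
  "tuple_term k R j ns t = (t - ln ((\<Prod>i<j. real (ns i)) * R ^ (k - j))) ^ (k - j - 1)
     / (fact (k - j - 1) * (ln R) ^ (k - j - 1))"

definition tuple_weight :: "nat \<Rightarrow> real \<Rightarrow> nat \<Rightarrow> real" where
  "tuple_weight k R m = (\<Sum>j = 0..k-1. real (k choose j) * real (card (divisor_tuples k R j m)))"

lemma P_poly_eq_tuple_sum:
  "P_poly k X m t = (\<Sum>j = 0..k-1. real (k choose j) *
     (\<Sum>ns\<in>divisor_tuples k (R_k k X) j m. tuple_term k (R_k k X) j ns t))"
  unfolding P_poly_def divisor_tuples_def tuple_term_def ..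

lemma finite_divisor_tuples: "finite (divisor_tuples k R j m)"
  by (rule finite_subset[of _ "{0..<k-1} \<rightarrow>\<^sub>E {1..m}"]) (auto simp: divisor_tuples_def finite_PiE)

lemma tuple_weight_nonneg: "tuple_weight k R m \<ge> 0"
  unfolding tuple_weight_def by (intro sum_nonneg) auto

lemma abs_tuple_sum_le:
  assumes "\<And>j ns. j \<le> k - 1 \<Longrightarrow> ns \<in> divisor_tuples k R j m \<Longrightarrow> \<bar>f j ns\<bar> \<le> b"
  shows "\<bar>\<Sum>j = 0..k-1. real (k choose j) * (\<Sum>ns\<in>divisor_tuples k R j m. f j ns)\<bar>
         \<le> b * tuple_weight k R m"
proof -
  have "\<bar>\<Sum>j = 0..k-1. real (k choose j) * (\<Sum>ns\<in>divisor_tuples k R j m. f j ns)\<bar>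
      \<le> (\<Sum>j = 0..k-1. real (k choose j) * (\<Sum>ns\<in>divisor_tuples k R j m. \<bar>f j ns\<bar>))"
    by (rule order_trans[OF sum_abs]) (auto simp: abs_mult intro!: sum_mono mult_left_mono sum_abs)
  also have "\<dots> \<le> (\<Sum>j = 0..k-1. real (k choose j) * (\<Sum>ns\<in>divisor_tuples k R j m. b))"
    using assms by (intro sum_mono mult_left_mono) auto
  also have "\<dots> = b * tuple_weight k R m"
    unfolding tuple_weight_def by (simp add: sum_distrib_left ac_simps)
  finally show ?thesis .
qed

lemma abs_power_diff_le:
  fixes a b B :: real
  assumes "\<bar>a\<bar> \<le> B" "\<bar>b\<bar> \<le> B"
  shows "\<bar>a ^ Suc e - b ^ Suc e\<bar> \<le> real (Suc e) * B ^ e * \<bar>a - b\<bar>"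
proof (induction e)
  case 0 then show ?case by simp
next
  case (Suc e)
  have "a ^ Suc (Suc e) - b ^ Suc (Suc e) = a * (a ^ Suc e - b ^ Suc e) + b ^ Suc e * (a - b)"
    by (simp add: algebra_simps)
  then have "\<bar>a ^ Suc (Suc e) - b ^ Suc (Suc e)\<bar> \<le> \<bar>a\<bar> * \<bar>a ^ Suc e - b ^ Suc e\<bar> + \<bar>b\<bar> ^ Suc e * \<bar>a - b\<bar>"
    by (metis abs_mult abs_triangle_ineq power_abs)
  also have "\<dots> \<le> B * (real (Suc e) * B ^ e * \<bar>a - b\<bar>) + B ^ Suc e * \<bar>a - b\<bar>"
    using Suc assms by (intro add_mono mult_mono power_mono mult_right_mono) auto
  also have "\<dots> = real (Suc (Suc e)) * B ^ Suc e * \<bar>a - b\<bar>" by (simp add: algebra_simps)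
  finally show ?case .
qed

lemma scaled_power_bounds:
  fixes l c t t' \<kappa> :: real and e :: nat
  assumes l: "l > 0" and \<kappa>: "\<kappa> \<ge> 1"
    and t: "\<bar>t - c\<bar> \<le> \<kappa> * l" and t': "\<bar>t' - c\<bar> \<le> \<kappa> * l"
  shows "\<bar>(t - c) ^ e / (fact e * l ^ e)\<bar> \<le> \<kappa> ^ e"
    and "\<bar>(t - c) ^ e / (fact e * l ^ e) - (t' - c) ^ e / (fact e * l ^ e)\<bar> \<le> \<kappa> ^ e / l * \<bar>t - t'\<bar>"
proof -
  have lp: "l ^ e > 0" using l by simp
  have "\<bar>(t - c) ^ e / (fact e * l ^ e)\<bar> = \<bar>t - c\<bar> ^ e / (fact e * l ^ e)"
    using lp l by (simp add: abs_mult power_abs)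
  also have "\<dots> \<le> \<bar>t - c\<bar> ^ e / l ^ e"
    using lp by (intro divide_left_mono) (auto simp: fact_ge_1 intro: mult_right_mono[of 1, simplified])
  also have "\<dots> \<le> (\<kappa> * l) ^ e / l ^ e" using t lp by (intro divide_right_mono power_mono) auto
  also have "\<dots> = \<kappa> ^ e" using l by (simp add: power_mult_distrib)
  finally show "\<bar>(t - c) ^ e / (fact e * l ^ e)\<bar> \<le> \<kappa> ^ e" .
  show "\<bar>(t - c) ^ e / (fact e * l ^ e) - (t' - c) ^ e / (fact e * l ^ e)\<bar> \<le> \<kappa> ^ e / l * \<bar>t - t'\<bar>"
  proof (cases e)
    case 0 then show ?thesis using l by simp
  next
    case (Suc e')
    have "\<bar>(t - c) ^ e / (fact e * l ^ e) - (t' - c) ^ e / (fact e * l ^ e)\<bar>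
        = \<bar>(t - c) ^ Suc e' - (t' - c) ^ Suc e'\<bar> / (fact e * l ^ e)"
      using Suc lp by (simp add: diff_divide_distrib[symmetric] abs_divide)
    also have "\<dots> \<le> real (Suc e') * (\<kappa> * l) ^ e' * \<bar>t - t'\<bar> / (fact e * l ^ e)"
      using abs_power_diff_le[OF t t', of e'] lp by (intro divide_right_mono) auto
    also have "\<dots> = real (Suc e') * \<kappa> ^ e' * \<bar>t - t'\<bar> * l ^ e' / (fact e * l * l ^ e')"
      using Suc by (simp add: power_mult_distrib ac_simps)
    also have "\<dots> = (real (Suc e') / fact (Suc e')) * (\<kappa> ^ e' / l) * \<bar>t - t'\<bar>"
      using Suc l by simp
    also have "\<dots> \<le> 1 * (\<kappa> ^ e / l) * \<bar>t - t'\<bar>"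
    proof (intro mult_right_mono mult_mono)
      have "real (Suc e') \<le> fact (Suc e')" by (metis fact_ge_self of_nat_fact of_nat_le_iff)
      then show "real (Suc e') / fact (Suc e') \<le> 1" by simp
      have "\<kappa> ^ e' \<le> \<kappa> ^ e" using \<kappa> Suc by (intro power_increasing) auto
      then show "\<kappa> ^ e' / l \<le> \<kappa> ^ e / l" using l by (simp add: divide_right_mono)
    qed (use \<kappa> l in auto)
    finally show ?thesis by simp
  qed
qed

lemma divisor_tuples_prefix_prod_bounds:
  assumes "R \<ge> 1" "j \<le> k - 1" "ns \<in> divisor_tuples k R j m"
  shows "1 \<le> (\<Prod>i<j. real (ns i))" "(\<Prod>i<j. real (ns i)) \<le> R ^ j"
proof -
  have "1 \<le> ns i \<and> real (ns i) \<le> R" if "i < j" for i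
    using assms that unfolding divisor_tuples_def by (auto simp: PiE_iff)
  then show "1 \<le> (\<Prod>i<j. real (ns i))" "(\<Prod>i<j. real (ns i)) \<le> R ^ j"
    using assms(1) by (auto intro!: prod_ge_1 prod_le_power)
qed

lemma tuple_term_bounds:
  assumes R: "R > 1" and j: "j < k" and ns: "ns \<in> divisor_tuples k R j m"
    and t: "0 \<le> t" "t \<le> 20 * real k * ln R" and t': "0 \<le> t'" "t' \<le> 20 * real k * ln R"
  shows "\<bar>tuple_term k R j ns t\<bar> \<le> (20 * real k) ^ (k - 1)"
    and "\<bar>tuple_term k R j ns t - tuple_term k R j ns t'\<bar> \<le> (20 * real k) ^ (k - 1) / ln R * \<bar>t - t'\<bar>"
proof -
  define c where "c = ln ((\<Prod>i<j. real (ns i)) * R ^ (k - j))"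
  have R1: "R \<ge> 1" and jk: "j \<le> k - 1" and lR: "ln R > 0" using R j by auto
  note pr = divisor_tuples_prefix_prod_bounds[OF R1 jk ns]
  have Rkj: "1 \<le> R ^ (k - j)" using R1 by simp
  have pos: "1 \<le> (\<Prod>i<j. real (ns i)) * R ^ (k - j)" using mult_mono[OF pr(1) Rkj] pr(1) by simp
  then have c0: "0 \<le> c" unfolding c_def by simp
  have "(\<Prod>i<j. real (ns i)) * R ^ (k - j) \<le> R ^ j * R ^ (k - j)"
    using pr(2) Rkj by (intro mult_right_mono) auto
  also have "\<dots> = R ^ k" using j by (simp flip: power_add)
  finally have "c \<le> ln (R ^ k)" unfolding c_def using pos by simp
  also have "\<dots> = real k * ln R" using R by (simp add: ln_realpow)
  also have "\<dots> \<le> 20 * real k * ln R" using lR by (intro mult_right_mono) auto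
  finally have ck: "c \<le> 20 * real k * ln R" .
  have "\<bar>t - c\<bar> \<le> (20 * real k) * ln R" "\<bar>t' - c\<bar> \<le> (20 * real k) * ln R"
    using t t' c0 ck by (simp_all add: abs_le_iff)
  note bounds = scaled_power_bounds[OF lR _ this, of "k - j - 1"]
  have \<kappa>: "20 * real k \<ge> 1" using j by simp
  have pow: "(20 * real k) ^ (k - j - 1) \<le> (20 * real k) ^ (k - 1)"
    using \<kappa> by (intro power_increasing) auto
  have tt: "tuple_term k R j ns s = (s - c) ^ (k - j - 1) / (fact (k - j - 1) * ln R ^ (k - j - 1))" for s
    unfolding tuple_term_def c_def ..
  show "\<bar>tuple_term k R j ns t\<bar> \<le> (20 * real k) ^ (k - 1)"
    unfolding tt using bounds(1)[OF \<kappa>] pow by linarith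
  have "(20 * real k) ^ (k - j - 1) / ln R * \<bar>t - t'\<bar> \<le> (20 * real k) ^ (k - 1) / ln R * \<bar>t - t'\<bar>"
    using pow lR by (intro mult_right_mono divide_right_mono) auto
  then show "\<bar>tuple_term k R j ns t - tuple_term k R j ns t'\<bar> \<le> (20 * real k) ^ (k - 1) / ln R * \<bar>t - t'\<bar>"
    unfolding tt using bounds(2)[OF \<kappa>] by linarith
qed

lemma ln_R_k: "ln (R_k k X) = ln X / (10 * real k)"
  unfolding R_k_def by simp

lemma P_poly_bounds:
  assumes X: "X > 1" and k: "k \<ge> 1"
    and t: "0 \<le> t" "t \<le> 2 * ln X" and t': "0 \<le> t'" "t' \<le> 2 * ln X"
  shows "\<bar>P_poly k X m t\<bar> \<le> (20 * real k) ^ k * tuple_weight k (R_k k X) m"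
    and "\<bar>P_poly k X m t - P_poly k X m t'\<bar>
           \<le> (20 * real k) ^ k / ln X * tuple_weight k (R_k k X) m * \<bar>t - t'\<bar>"
proof -
  define R where "R = R_k k X"
  have lR: "ln R = ln X / (10 * real k)" unfolding R_def by (rule ln_R_k)
  have lX: "ln X > 0" using X by simp
  have R: "R > 1" unfolding R_def R_k_def using X k by (intro gr_one_powr) auto
  have range: "20 * real k * ln R = 2 * ln X" using k unfolding lR by simp
  have W: "tuple_weight k R m \<ge> 0" by (rule tuple_weight_nonneg)
  have pow: "(20 * real k) ^ (k - 1) \<le> (20 * real k) ^ k" using k by (intro power_increasing) auto
  have jk: "j < k" if "j \<le> k - 1" for j using that k by linarith
  note tb = tuple_term_bounds[OF R jk _ t[folded range] t'[folded range]]
  have "\<bar>P_poly k X m t\<bar> \<le> (20 * real k) ^ (k - 1) * tuple_weight k R m"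
    unfolding P_poly_eq_tuple_sum R_def[symmetric] by (rule abs_tuple_sum_le) (rule tb(1))
  also have "\<dots> \<le> (20 * real k) ^ k * tuple_weight k R m" using pow W by (rule mult_right_mono)
  finally show "\<bar>P_poly k X m t\<bar> \<le> (20 * real k) ^ k * tuple_weight k (R_k k X) m" unfolding R_def .
  have lip: "(20 * real k) ^ (k - 1) / ln R = (20 * real k) ^ (k - 1) * (10 * real k) / ln X"
    unfolding lR using k by simp
  also have "\<dots> \<le> (20 * real k) ^ k / ln X"
  proof -
    have "(20 * real k) ^ (k - 1) * (10 * real k) \<le> (20 * real k) ^ (k - 1) * (20 * real k)"
      by (intro mult_left_mono) auto
    also have "\<dots> = (20 * real k) ^ k" using k by (simp add: power_eq_if)
    finally show ?thesis using lX by (intro divide_right_mono) auto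
  qed
  finally have lip: "(20 * real k) ^ (k - 1) / ln R \<le> (20 * real k) ^ k / ln X" .
  have "\<bar>P_poly k X m t - P_poly k X m t'\<bar>
      = \<bar>\<Sum>j = 0..k-1. real (k choose j) *
           (\<Sum>ns\<in>divisor_tuples k R j m. tuple_term k R j ns t - tuple_term k R j ns t')\<bar>"
    unfolding P_poly_eq_tuple_sum R_def[symmetric] sum_subtractf[symmetric] right_diff_distrib[symmetric] ..
  also have "\<dots> \<le> (20 * real k) ^ (k - 1) / ln R * \<bar>t - t'\<bar> * tuple_weight k R m"
    by (rule abs_tuple_sum_le) (rule tb(2))
  also have "\<dots> \<le> (20 * real k) ^ k / ln X * \<bar>t - t'\<bar> * tuple_weight k R m"
    using lip W by (intro mult_right_mono) auto
  finally show "\<bar>P_poly k X m t - P_poly k X m t'\<bar>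
           \<le> (20 * real k) ^ k / ln X * tuple_weight k (R_k k X) m * \<bar>t - t'\<bar>"
    unfolding R_def by (simp add: ac_simps)
qed

lemma window_sum_smooth_approx:
  fixes F :: "nat \<Rightarrow> real" and S :: "nat set"
  assumes S: "finite S" "\<bar>real (card S) - c * H\<bar> \<le> 1" and H: "H > 0" and c: "c \<ge> 0"
    and F: "\<And>n. n \<in> S \<Longrightarrow> \<bar>F n - F0\<bar> \<le> d" and d: "d \<ge> 0"
  shows "\<bar>(1/H) * (\<Sum>n\<in>S. F n) - c * F0\<bar> \<le> \<bar>F0\<bar> / H + (c + 1/H) * d"
proof -
  have "\<bar>(\<Sum>n\<in>S. F n) - c * H * F0\<bar> = \<bar>(real (card S) - c * H) * F0 + (\<Sum>n\<in>S. F n - F0)\<bar>"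
    by (simp add: sum_subtractf algebra_simps)
  also have "\<dots> \<le> \<bar>real (card S) - c * H\<bar> * \<bar>F0\<bar> + (\<Sum>n\<in>S. \<bar>F n - F0\<bar>)"
    by (rule order_trans[OF abs_triangle_ineq add_mono]) (simp_all add: abs_mult sum_abs)
  also have "\<dots> \<le> 1 * \<bar>F0\<bar> + real (card S) * d"
    using S(2) F sum_mono[of S "\<lambda>n. \<bar>F n - F0\<bar>" "\<lambda>_. d"] by (intro add_mono mult_right_mono) auto
  also have "\<dots> \<le> \<bar>F0\<bar> + (c * H + 1) * d"
  proof -
    have "real (card S) \<le> c * H + 1" using abs_le_D1[OF S(2)] by simp
    then show ?thesis using d by (simp add: mult_right_mono)
  qed
  finally have "\<bar>(\<Sum>n\<in>S. F n) - c * H * F0\<bar> / H \<le> (\<bar>F0\<bar> + (c * H + 1) * d) / H"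
    using H by (intro divide_right_mono) auto
  moreover have "\<bar>(\<Sum>n\<in>S. F n) - c * H * F0\<bar> / H = \<bar>(1/H) * (\<Sum>n\<in>S. F n) - c * F0\<bar>"
  proof -
    have "(1/H) * (\<Sum>n\<in>S. F n) - c * F0 = ((\<Sum>n\<in>S. F n) - c * H * F0) / H"
      using H by (simp add: field_simps)
    then show ?thesis using H by (simp add: abs_divide)
  qed
  moreover have "(\<bar>F0\<bar> + (c * H + 1) * d) / H = \<bar>F0\<bar> / H + (c + 1/H) * d"
    using H by (simp add: field_simps)
  ultimately show ?thesis by simp
qed

lemma ln_window_bounds:
  fixes X H :: real and n :: nat
  assumes "X > 0" "X < real n" "real n \<le> X + H"
  shows "ln X \<le> ln (real n)" "ln (real n) \<le> ln X + H / X"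
proof -
  show "ln X \<le> ln (real n)" using assms by simp
  have "ln (real n) - ln X = ln (real n / X)" using assms by (simp add: ln_div)
  also have "\<dots> \<le> real n / X - 1" using assms by (intro ln_le_minus_one) auto
  also have "\<dots> = (real n - X) / X" using assms by (simp add: field_simps)
  also have "\<dots> \<le> H / X" using assms by (intro divide_right_mono) auto
  finally show "ln (real n) \<le> ln X + H / X" by simp
qed

lemma divisor_window_avg_diff:
  fixes F :: "real \<Rightarrow> real"
  assumes X: "X > 0" and H: "0 < H1" "H1 \<le> H2" and q: "q \<ge> 1" and m: "m \<ge> 1"
    and F: "\<And>t. ln X \<le> t \<Longrightarrow> t \<le> ln X + H2 / X \<Longrightarrow> \<bar>F t - F (ln X)\<bar> \<le> \<delta>"
  shows "\<bar>(1/H1) * (\<Sum>n | n \<in> ap_window X H1 a q \<and> m dvd n. F (ln (real n)))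
           - (1/H2) * (\<Sum>n | n \<in> ap_window X H2 a q \<and> m dvd n. F (ln (real n)))\<bar>
         \<le> 2 * (\<bar>F (ln X)\<bar> / H1 + (1 / real m + 1 / H1) * \<delta>)"
proof -
  define c where "c = dvd_density q a m"
  have "0 \<le> H2 / X" using X H by simp
  then have \<delta>: "\<delta> \<ge> 0" using F[of "ln X"] by simp
  have c: "0 \<le> c" "c \<le> 1 / real m" unfolding c_def using dvd_density_nonneg dvd_density_le q m by auto
  have approx: "\<bar>(1/H) * (\<Sum>n | n \<in> ap_window X H a q \<and> m dvd n. F (ln (real n))) - c * F (ln X)\<bar>
      \<le> \<bar>F (ln X)\<bar> / H1 + (1 / real m + 1 / H1) * \<delta>" if "H1 \<le> H" "H \<le> H2" for H
  proof -
    have "\<bar>(1/H) * (\<Sum>n | n \<in> ap_window X H a q \<and> m dvd n. F (ln (real n))) - c * F (ln X)\<bar>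
        \<le> \<bar>F (ln X)\<bar> / H + (c + 1/H) * \<delta>"
    proof (rule window_sum_smooth_approx)
      show "finite {n. n \<in> ap_window X H a q \<and> m dvd n}" using finite_ap_window by simp
      show "\<bar>real (card {n. n \<in> ap_window X H a q \<and> m dvd n}) - c * H\<bar> \<le> 1"
        using card_ap_window_dvd[OF q m, of X H a] X H that unfolding c_def by simp
      fix n assume "n \<in> {n. n \<in> ap_window X H a q \<and> m dvd n}"
      then have "X < real n" "real n \<le> X + H" unfolding ap_window_def by auto
      moreover have "H / X \<le> H2 / X" using that X by (intro divide_right_mono) auto
      ultimately show "\<bar>F (ln (real n)) - F (ln X)\<bar> \<le> \<delta>"
        using F ln_window_bounds[OF X] by (meson add_left_mono order_trans)
    qed (use H that c \<delta> in auto)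
    also have "\<dots> \<le> \<bar>F (ln X)\<bar> / H1 + (1 / real m + 1 / H1) * \<delta>"
      using H that c \<delta> by (intro add_mono mult_right_mono divide_left_mono) auto
    finally show ?thesis .
  qed
  define avg where "avg H = (1/H) * (\<Sum>n | n \<in> ap_window X H a q \<and> m dvd n. F (ln (real n)))" for H
  define e where "e = \<bar>F (ln X)\<bar> / H1 + (1 / real m + 1 / H1) * \<delta>"
  have "\<bar>avg H1 - avg H2\<bar> \<le> 2 * e"
    using approx[OF order_refl H(2)] approx[OF H(2) order_refl] unfolding avg_def[symmetric] e_def[symmetric]
    by linarith
  then show ?thesis unfolding avg_def e_def .
qed

lemma win_avg_divisor_sum:
  assumes "finite M"
  shows "win_avg (\<lambda>n. \<Sum>m | m \<in> M \<and> m dvd n. g m n) X H a q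
         = (\<Sum>m\<in>M. (1/H) * (\<Sum>n | n \<in> ap_window X H a q \<and> m dvd n. g m n))"
proof -
  have "win_avg (\<lambda>n. \<Sum>m | m \<in> M \<and> m dvd n. g m n) X H a q
      = (1/H) * (\<Sum>n\<in>ap_window X H a q. \<Sum>m\<in>M. if m dvd n then g m n else 0)"
    unfolding win_avg_ap_window using assms by (simp add: sum.inter_filter)
  also have "\<dots> = (1/H) * (\<Sum>m\<in>M. \<Sum>n\<in>ap_window X H a q. if m dvd n then g m n else 0)"
    by (subst sum.swap) (rule refl)
  also have "\<dots> = (\<Sum>m\<in>M. (1/H) * (\<Sum>n | n \<in> ap_window X H a q \<and> m dvd n. g m n))"
    using finite_ap_window by (simp add: sum.inter_filter sum_distrib_left)
  finally show ?thesis .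
qed

lemma prod_divisor_tuple: "ns \<in> divisor_tuples k R j m \<Longrightarrow> (\<Prod>i<k-1. ns i) = m"
  unfolding divisor_tuples_def by simp

lemma divisor_tuples_subset_PiE:
  assumes "R \<ge> 1"
  shows "divisor_tuples k R j m \<subseteq> {0..<k-1} \<rightarrow>\<^sub>E {1..nat \<lfloor>R^2\<rfloor>}"
proof
  fix ns assume ns: "ns \<in> divisor_tuples k R j m"
  have "ns i \<in> {1..nat \<lfloor>R^2\<rfloor>}" if i: "i \<in> {0..<k-1}" for i
  proof -
    have "ns i \<ge> 1" using ns i unfolding divisor_tuples_def by (auto simp: PiE_iff)
    moreover have "real (ns i) \<le> R^2"
    proof (cases "i < j")
      case True
      then have "real (ns i) \<le> R" using ns unfolding divisor_tuples_def by auto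
      also have "R \<le> R^2" using assms by (simp add: power2_eq_square)
      finally show ?thesis .
    next
      case False
      then show ?thesis using ns i unfolding divisor_tuples_def by auto
    qed
    then have "ns i \<le> nat \<lfloor>R^2\<rfloor>" by (simp add: le_nat_floor)
    ultimately show ?thesis by simp
  qed
  then show "ns \<in> {0..<k-1} \<rightarrow>\<^sub>E {1..nat \<lfloor>R^2\<rfloor>}"
    using ns unfolding divisor_tuples_def by (auto simp: PiE_iff)
qed

text \<open>The sets of tuples for different \<open>m\<close> are disjoint, since \<open>m\<close> is the product of the tuple.\<close>
lemma sum_divisor_tuples_le_sum_PiE:
  fixes h :: "(nat \<Rightarrow> nat) \<Rightarrow> real"
  assumes M: "finite M" and R: "R \<ge> 1"
    and h: "\<And>ns. ns \<in> {0..<k-1} \<rightarrow>\<^sub>E {1..nat \<lfloor>R^2\<rfloor>} \<Longrightarrow> h ns \<ge> 0"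
  shows "(\<Sum>m\<in>M. \<Sum>ns\<in>divisor_tuples k R j m. h ns) \<le> (\<Sum>ns\<in>{0..<k-1} \<rightarrow>\<^sub>E {1..nat \<lfloor>R^2\<rfloor>}. h ns)"
proof -
  have "(\<Sum>m\<in>M. \<Sum>ns\<in>divisor_tuples k R j m. h ns) = (\<Sum>ns\<in>(\<Union>m\<in>M. divisor_tuples k R j m). h ns)"
    using M by (intro sum.UNION_disjoint[symmetric]) (auto simp: finite_divisor_tuples dest: prod_divisor_tuple)
  also have "\<dots> \<le> (\<Sum>ns\<in>{0..<k-1} \<rightarrow>\<^sub>E {1..nat \<lfloor>R^2\<rfloor>}. h ns)"
  proof (rule sum_mono2)
    show "(\<Union>m\<in>M. divisor_tuples k R j m) \<subseteq> {0..<k-1} \<rightarrow>\<^sub>E {1..nat \<lfloor>R^2\<rfloor>}"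
      using divisor_tuples_subset_PiE[OF R] by blast
  qed (use h in \<open>auto simp: finite_PiE\<close>)
  finally show ?thesis .
qed

lemma sum_card_divisor_tuples_le:
  assumes "finite M" "R \<ge> 1"
  shows "(\<Sum>m\<in>M. real (card (divisor_tuples k R j m))) \<le> real (nat \<lfloor>R^2\<rfloor>) ^ (k - 1)"
  using sum_divisor_tuples_le_sum_PiE[OF assms, of k "\<lambda>_. 1" j] by (simp add: card_PiE)

lemma sum_card_divisor_tuples_div_le:
  assumes "finite M" "R \<ge> 1"
  shows "(\<Sum>m\<in>M. real (card (divisor_tuples k R j m)) / real m)
         \<le> (\<Sum>x = 1..nat \<lfloor>R^2\<rfloor>. 1 / real x) ^ (k - 1)"
proof -
  define h where "h ns = (\<Prod>i\<in>{0..<k-1}. 1 / real (ns i))" for ns :: "nat \<Rightarrow> nat"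
  have "h ns = 1 / real m" if "ns \<in> divisor_tuples k R j m" for ns m
    using prod_divisor_tuple[OF that] unfolding h_def
    by (simp add: prod_dividef of_nat_prod[symmetric] atLeast0LessThan)
  then have "(\<Sum>m\<in>M. real (card (divisor_tuples k R j m)) / real m)
      = (\<Sum>m\<in>M. \<Sum>ns\<in>divisor_tuples k R j m. h ns)" by simp
  also have "\<dots> \<le> (\<Sum>ns\<in>{0..<k-1} \<rightarrow>\<^sub>E {1..nat \<lfloor>R^2\<rfloor>}. h ns)"
    by (rule sum_divisor_tuples_le_sum_PiE[OF assms]) (auto simp: h_def intro!: prod_nonneg)
  also have "\<dots> = (\<Prod>i\<in>{0..<k-1}. \<Sum>x = 1..nat \<lfloor>R^2\<rfloor>. 1 / real x)"
    unfolding h_def by (rule prod_sum_PiE[symmetric]) auto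
  also have "\<dots> = (\<Sum>x = 1..nat \<lfloor>R^2\<rfloor>. 1 / real x) ^ (k - 1)" by simp
  finally show ?thesis .
qed

lemma sum_binomial_weighted_le:
  fixes g :: "nat \<Rightarrow> 'a \<Rightarrow> real"
  assumes "\<And>j. (\<Sum>m\<in>M. g j m) \<le> b" "b \<ge> 0"
  shows "(\<Sum>m\<in>M. \<Sum>j = 0..k-1. real (k choose j) * g j m) \<le> 2 ^ k * b"
proof -
  have "(\<Sum>m\<in>M. \<Sum>j = 0..k-1. real (k choose j) * g j m) = (\<Sum>j = 0..k-1. real (k choose j) * (\<Sum>m\<in>M. g j m))"
    by (subst sum.swap) (simp add: sum_distrib_left)
  also have "\<dots> \<le> (\<Sum>j = 0..k-1. real (k choose j) * b)" using assms by (intro sum_mono mult_left_mono) auto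
  also have "\<dots> \<le> (\<Sum>j\<le>k. real (k choose j) * b)" using assms by (intro sum_mono2) auto
  also have "\<dots> = 2 ^ k * b" by (simp flip: sum_distrib_right of_nat_sum add: choose_row_sum)
  finally show ?thesis .
qed

lemma sum_tuple_weight_le:
  assumes "finite M" "R \<ge> 1"
  shows "(\<Sum>m\<in>M. tuple_weight k R m) \<le> 2 ^ k * real (nat \<lfloor>R^2\<rfloor>) ^ (k - 1)"
  unfolding tuple_weight_def using sum_card_divisor_tuples_le[OF assms]
  by (intro sum_binomial_weighted_le) auto

lemma sum_tuple_weight_div_le:
  assumes "finite M" "R \<ge> 1"
  shows "(\<Sum>m\<in>M. tuple_weight k R m / real m) \<le> 2 ^ k * (\<Sum>x = 1..nat \<lfloor>R^2\<rfloor>. 1 / real x) ^ (k - 1)"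
proof -
  have "tuple_weight k R m / real m
      = (\<Sum>j = 0..k-1. real (k choose j) * (real (card (divisor_tuples k R j m)) / real m))" for m
    unfolding tuple_weight_def by (simp add: sum_divide_distrib)
  then show ?thesis using sum_card_divisor_tuples_div_le[OF assms]
    by (simp only:) (rule sum_binomial_weighted_le, auto intro!: zero_le_power sum_nonneg)
qed

lemma sum_inverse_le_one_plus_ln:
  assumes "N \<ge> 1"
  shows "(\<Sum>x = 1..N. 1 / real x) \<le> 1 + ln (real N)"
  using assms
proof (induction N rule: dec_induct)
  case base then show ?case by simp
next
  case (step N)
  have "ln (real N / real (Suc N)) \<le> real N / real (Suc N) - 1"
    using step by (intro ln_le_minus_one) auto
  then have "1 / real (Suc N) \<le> ln (real (Suc N)) - ln (real N)"
    using step by (simp add: ln_div field_simps)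
  then show ?case using step by simp
qed

lemma P_poly_variation_near_ln:
  assumes k: "k \<ge> 1" and X: "1 \<le> ln X" "X > 0" and h: "0 \<le> h" "h \<le> 1"
    and t: "ln X \<le> t" "t \<le> ln X + h"
  shows "\<bar>P_poly k X m t - P_poly k X m (ln X)\<bar> \<le> (20 * real k) ^ k / ln X * tuple_weight k (R_k k X) m * h"
proof -
  have X1: "X > 1" using ln_gt_zero_imp_gt_one[of X] X by linarith
  have "\<bar>P_poly k X m t - P_poly k X m (ln X)\<bar>
      \<le> (20 * real k) ^ k / ln X * tuple_weight k (R_k k X) m * \<bar>t - ln X\<bar>"
    using P_poly_bounds(2)[OF X1 k, of t "ln X" m] t X X1 h by auto
  also have "\<dots> \<le> (20 * real k) ^ k / ln X * tuple_weight k (R_k k X) m * h"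
  proof (rule mult_left_mono)
    show "0 \<le> (20 * real k) ^ k / ln X * tuple_weight k (R_k k X) m"
      using X X1 by (intro mult_nonneg_nonneg divide_nonneg_nonneg tuple_weight_nonneg) auto
  qed (use t in auto)
  finally show ?thesis .
qed

lemma P_poly_divisor_window_avg_diff:
  assumes k: "k \<ge> 1" and X: "1 \<le> ln X" "H2 \<le> X" and H: "0 < H1" "H1 \<le> H2" and q: "q \<ge> 1" and m: "m \<ge> 1"
  shows "\<bar>(1/H1) * (\<Sum>n | n \<in> ap_window X H1 a q \<and> m dvd n. P_poly k X m (ln (real n)))
           - (1/H2) * (\<Sum>n | n \<in> ap_window X H2 a q \<and> m dvd n. P_poly k X m (ln (real n)))\<bar>
         \<le> 4 * (20 * real k) ^ k * tuple_weight k (R_k k X) m / H1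
           + 2 * ((20 * real k) ^ k / ln X) * (H2 / X) * (tuple_weight k (R_k k X) m / real m)"
proof -
  define B where "B = (20 * real k) ^ k"
  define W where "W = tuple_weight k (R_k k X) m"
  define \<delta> where "\<delta> = B / ln X * W * (H2 / X)"
  have X0: "X > 0" using X H by linarith
  have X1: "X > 1" using ln_gt_zero_imp_gt_one[of X] X X0 by linarith
  have BW: "B * W \<ge> 0" unfolding B_def W_def by (simp add: tuple_weight_nonneg)
  have HX: "0 \<le> H2 / X" "H2 / X \<le> 1" using X0 X H by auto
  have "(H2 / X) / ln X \<le> (H2 / X) / 1" using HX(1) X(1) by (intro divide_left_mono) auto
  then have "(H2 / X) / ln X \<le> 1" using HX(2) by simp
  then have "B * W * ((H2 / X) / ln X) \<le> B * W * 1" using BW by (rule mult_left_mono)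
  moreover have "\<delta> = B * W * ((H2 / X) / ln X)" unfolding \<delta>_def by simp
  ultimately have \<delta>: "\<delta> \<le> B * W" by simp
  have "\<bar>(1/H1) * (\<Sum>n | n \<in> ap_window X H1 a q \<and> m dvd n. P_poly k X m (ln (real n)))
           - (1/H2) * (\<Sum>n | n \<in> ap_window X H2 a q \<and> m dvd n. P_poly k X m (ln (real n)))\<bar>
         \<le> 2 * (\<bar>P_poly k X m (ln X)\<bar> / H1 + (1 / real m + 1 / H1) * \<delta>)"
    using P_poly_variation_near_ln[OF k X(1) X0 HX] unfolding \<delta>_def B_def W_def
    by (intro divisor_window_avg_diff[OF X0 H q m])
  also have "\<dots> = 2 * (\<bar>P_poly k X m (ln X)\<bar> / H1) + 2 * (\<delta> / H1) + 2 * (\<delta> / real m)"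
    by (simp add: algebra_simps)
  also have "\<dots> \<le> 2 * (B * W / H1) + 2 * (B * W / H1) + 2 * (\<delta> / real m)"
  proof (intro add_mono mult_left_mono order_refl divide_right_mono)
    show "\<bar>P_poly k X m (ln X)\<bar> \<le> B * W"
      using P_poly_bounds(1)[OF X1 k, of "ln X" "ln X" m] X X1 unfolding B_def W_def by auto
  qed (use \<delta> H in auto)
  also have "\<dots> = 4 * B * W / H1 + 2 * (B / ln X) * (H2 / X) * (W / real m)"
    unfolding \<delta>_def by (simp add: algebra_simps)
  finally show ?thesis unfolding B_def W_def .
qed

lemma dk_sharp_eq_divisor_sum:
  "dk_sharp k X = (\<lambda>n. \<Sum>m | m \<in> {m. 1 \<le> m \<and> real m \<le> R_k k X ^ (2*k - 2)} \<and> m dvd n.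
     P_poly k X m (ln (real n)))"
  unfolding dk_sharp_def by (simp add: conj_assoc)

lemma dk_sharp_window_diff_le_tuple_sums:
  fixes k :: nat and X H1 H2 :: real
  defines "M \<equiv> {m. 1 \<le> m \<and> real m \<le> R_k k X ^ (2*k - 2)}"
    and "W \<equiv> tuple_weight k (R_k k X)" and "B \<equiv> (20 * real k) ^ k"
  assumes k: "k \<ge> 1" and X: "1 \<le> ln X" "H2 \<le> X" and H: "0 < H1" "H1 \<le> H2" and q: "q \<ge> 1"
  shows "\<bar>win_avg (dk_sharp k X) X H1 a q - win_avg (dk_sharp k X) X H2 a q\<bar>
         \<le> 4 * B / H1 * (\<Sum>m\<in>M. W m) + 2 * (B / ln X) * (H2 / X) * (\<Sum>m\<in>M. W m / real m)"
proof -
  define avg where "avg H m = (1/H) * (\<Sum>n | n \<in> ap_window X H a q \<and> m dvd n. P_poly k X m (ln (real n)))"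
    for H m
  have M: "finite M" unfolding M_def by (rule finite_subset[OF _ finite_nat_real_le]) auto
  have "\<bar>win_avg (dk_sharp k X) X H1 a q - win_avg (dk_sharp k X) X H2 a q\<bar>
      = \<bar>\<Sum>m\<in>M. avg H1 m - avg H2 m\<bar>"
    unfolding dk_sharp_eq_divisor_sum M_def[symmetric] win_avg_divisor_sum[OF M] avg_def
    by (simp add: sum_subtractf)
  also have "\<dots> \<le> (\<Sum>m\<in>M. \<bar>avg H1 m - avg H2 m\<bar>)" by (rule sum_abs)
  also have "\<dots> \<le> (\<Sum>m\<in>M. 4 * B * W m / H1 + 2 * (B / ln X) * (H2 / X) * (W m / real m))"
    unfolding avg_def B_def W_def M_def
    by (intro sum_mono P_poly_divisor_window_avg_diff[OF k X H q]) simp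
  also have "\<dots> = 4 * B / H1 * (\<Sum>m\<in>M. W m) + 2 * (B / ln X) * (H2 / X) * (\<Sum>m\<in>M. W m / real m)"
    by (simp add: sum.distrib sum_distrib_left)
  finally show ?thesis .
qed

lemma one_le_ln_of_powr_quarter:
  fixes X :: real assumes X: "X > 0" "2 \<le> X powr (1/4)"
  shows "1 \<le> ln X"
proof -
  have "(2::real) ^ 4 \<le> (X powr (1/4)) ^ 4" using X by (intro power_mono) auto
  also have "\<dots> = X" using X by (simp add: powr_power)
  finally have "exp 1 \<le> X" using exp_le by simp
  then show ?thesis using X by (simp add: ln_ge_iff)
qed

lemma two_mult_two_pow_mult_two_pow_pred:
  assumes "k \<ge> 1"
  shows "2 * (2::real) ^ k * 2 ^ (k - 1) = 4 ^ k"
proof -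
  have "2 * (2::real) ^ (k - 1) = 2 ^ k" using assms by (simp add: power_eq_if[of 2 k])
  then have "2 * (2::real) ^ k * 2 ^ (k - 1) = 2 ^ k * 2 ^ k" by (simp add: ac_simps)
  also have "\<dots> = 4 ^ k" by (simp flip: power_mult_distrib)
  finally show ?thesis .
qed

lemma R_k_square_pow_div_le:
  fixes X H :: real
  assumes k: "k \<ge> 1" and X: "X \<ge> 1" and H: "X powr (1/4) \<le> H"
  shows "real (nat \<lfloor>R_k k X ^ 2\<rfloor>) ^ (k - 1) / H \<le> X powr (-1/100)"
proof -
  have R: "R_k k X \<ge> 1" unfolding R_k_def using X by (intro ge_one_powr_ge_zero) auto
  have "real (nat \<lfloor>R_k k X ^ 2\<rfloor>) ^ (k - 1) \<le> (R_k k X ^ 2) ^ (k - 1)"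
    using R by (intro power_mono) auto
  also have "\<dots> = X powr (real (2 * (k - 1)) * (1 / (10 * real k)))"
    unfolding R_k_def using X by (simp add: power_mult[symmetric] powr_power)
  also have "\<dots> \<le> X powr (1/5)"
  proof (rule powr_mono)
    have "real (2 * (k - 1)) * (1 / (10 * real k)) \<le> 2 * real k * (1 / (10 * real k))"
      by (intro mult_right_mono) auto
    also have "\<dots> = 1/5" using k by simp
    finally show "real (2 * (k - 1)) * (1 / (10 * real k)) \<le> 1/5" .
  qed (use X in auto)
  finally have num: "real (nat \<lfloor>R_k k X ^ 2\<rfloor>) ^ (k - 1) \<le> X powr (1/5)" .
  have "real (nat \<lfloor>R_k k X ^ 2\<rfloor>) ^ (k - 1) / H \<le> X powr (1/5) / X powr (1/4)"
    using num H X by (intro frac_le) auto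
  also have "\<dots> = X powr (1/5 - 1/4)" by (rule powr_diff[symmetric])
  also have "\<dots> \<le> X powr (-1/100)" using X by (intro powr_mono) auto
  finally show ?thesis .
qed

lemma harmonic_R_k_square_pow_div_le:
  fixes X :: real
  assumes k: "k \<ge> 2" and X: "X > 0" "1 \<le> ln X"
  shows "(\<Sum>x = 1..nat \<lfloor>R_k k X ^ 2\<rfloor>. 1 / real x) ^ (k - 1) / ln X \<le> 2 ^ (k - 1) * ln X ^ (k - 2)"
proof -
  define N where "N = nat \<lfloor>R_k k X ^ 2\<rfloor>"
  have X1: "X \<ge> 1" using ln_ge_zero_imp_ge_one[of X] X by linarith
  then have R: "R_k k X \<ge> 1" unfolding R_k_def by (intro ge_one_powr_ge_zero) auto
  have N: "N \<ge> 1" "real N \<le> R_k k X ^ 2" unfolding N_def using R by (simp_all add: le_nat_floor)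
  have "(\<Sum>x = 1..N. 1 / real x) \<le> 1 + ln (real N)" by (rule sum_inverse_le_one_plus_ln[OF N(1)])
  also have "ln (real N) \<le> ln (R_k k X ^ 2)" using N by (subst ln_le_cancel_iff) auto
  also have "\<dots> = ln X / (5 * real k)" using R by (simp add: ln_realpow ln_R_k)
  also have "\<dots> \<le> ln X / 1" using X X1 k by (intro divide_left_mono) auto
  finally have "(\<Sum>x = 1..N. 1 / real x) \<le> 2 * ln X" using X by linarith
  then have "(\<Sum>x = 1..N. 1 / real x) ^ (k - 1) \<le> (2 * ln X) ^ (k - 1)"
    by (intro power_mono) (auto intro: sum_nonneg)
  also have "\<dots> = 2 ^ (k - 1) * (ln X ^ (k - 2) * ln X)"
  proof -
    have "k - 1 = Suc (k - 2)" using k by simp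
    then show ?thesis by (simp add: power_mult_distrib)
  qed
  finally show ?thesis unfolding N_def using X X1 by (simp add: divide_le_eq)
qed

lemma dk_sharp_window_diff:
  fixes k :: nat and X H1 H2 :: real
  assumes k: "k \<ge> 2" and H: "X powr (1/4) \<le> H1" "H1 \<le> H2" "H2 \<le> X"
    and X: "2 \<le> X powr (1/4)" and q: "q \<ge> 1"
  shows "\<bar>win_avg (dk_sharp k X) X H1 a q - win_avg (dk_sharp k X) X H2 a q\<bar>
           \<le> 4 * (20 * real k) ^ k * 4 ^ k * (X powr (-1/100) + H2 / X * ln X ^ (k - 2))"
proof -
  define B where "B = (20 * real k) ^ k"
  define M where "M = {m. 1 \<le> m \<and> real m \<le> R_k k X ^ (2*k - 2)}"
  define N where "N = real (nat \<lfloor>R_k k X ^ 2\<rfloor>) ^ (k - 1)"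
  define S where "S = (\<Sum>x = 1..nat \<lfloor>R_k k X ^ 2\<rfloor>. 1 / real x) ^ (k - 1)"
  have H1: "0 < H1" using H X by linarith
  have X0: "X > 0" using H H1 by linarith
  have lX: "1 \<le> ln X" by (rule one_le_ln_of_powr_quarter[OF X0 X])
  have X1: "X \<ge> 1" using lX X0 ln_ge_zero_imp_ge_one[of X] by linarith
  have R: "R_k k X \<ge> 1" unfolding R_k_def using X1 by (intro ge_one_powr_ge_zero) auto
  have finM: "finite M" unfolding M_def by (rule finite_subset[OF _ finite_nat_real_le]) auto
  have B0: "B \<ge> 0" and HX: "H2 / X \<ge> 0" unfolding B_def using X0 H H1 by auto
  have coeff: "0 \<le> 2 * (B / ln X) * (H2 / X)"
    using B0 X0 X1 H H1 by (intro mult_nonneg_nonneg divide_nonneg_nonneg) auto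
  have coeff': "0 \<le> 2 * B * 2 ^ k * (H2 / X)" using B0 HX by (intro mult_nonneg_nonneg) auto
  have T: "0 \<le> H2 / X * ln X ^ (k - 2)" using lX by (intro mult_nonneg_nonneg HX zero_le_power) simp
  have "\<bar>win_avg (dk_sharp k X) X H1 a q - win_avg (dk_sharp k X) X H2 a q\<bar>
      \<le> 4 * B / H1 * (\<Sum>m\<in>M. tuple_weight k (R_k k X) m)
        + 2 * (B / ln X) * (H2 / X) * (\<Sum>m\<in>M. tuple_weight k (R_k k X) m / real m)"
    unfolding B_def M_def using k lX H H1 q by (intro dk_sharp_window_diff_le_tuple_sums) auto
  also have "\<dots> \<le> 4 * B / H1 * (2 ^ k * N) + 2 * (B / ln X) * (H2 / X) * (2 ^ k * S)"
    unfolding N_def S_def using sum_tuple_weight_le[OF finM R] sum_tuple_weight_div_le[OF finM R]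
      B0 H1 coeff by (intro add_mono mult_left_mono) auto
  also have "\<dots> = 4 * B * 2 ^ k * (N / H1) + 2 * B * 2 ^ k * (H2 / X) * (S / ln X)"
    by (simp add: field_simps)
  also have "\<dots> \<le> 4 * B * 2 ^ k * X powr (-1/100) + 2 * B * 2 ^ k * (H2 / X) * (2 ^ (k - 1) * ln X ^ (k - 2))"
    unfolding N_def S_def
    using R_k_square_pow_div_le[of k X H1] harmonic_R_k_square_pow_div_le[OF k X0 lX] k X1 H B0 coeff'
    by (intro add_mono mult_left_mono) auto
  also have "\<dots> = 4 * B * 2 ^ k * X powr (-1/100) + B * 4 ^ k * (H2 / X * ln X ^ (k - 2))"
    using two_mult_two_pow_mult_two_pow_pred[of k] k by (simp add: ac_simps)
  also have "\<dots> \<le> 4 * B * 4 ^ k * X powr (-1/100) + 4 * B * 4 ^ k * (H2 / X * ln X ^ (k - 2))"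
    using B0 T by (intro add_mono mult_right_mono mult_left_mono power_mono) auto
  finally show ?thesis unfolding B_def by (simp add: algebra_simps)
qed

theorem lemma3p3:
  shows "(\<exists>C::real. \<forall>X H1 H2 :: real. \<forall>a q :: nat.
            X \<ge> H2 \<and> H2 \<ge> H1 \<and> H1 \<ge> X powr (1/4) \<and> X powr (1/4) \<ge> 2 \<and> a \<ge> 1 \<and> q \<ge> 1 \<longrightarrow>
            \<bar>win_avg (Lambda_sharp X) X H1 a q - win_avg (Lambda_sharp X) X H2 a q\<bar>
              \<le> C * exp (- (ln X powr (1/10))))
       \<and> (\<forall>k::nat. k \<ge> 2 \<longrightarrow>
          (\<exists>C::real. \<forall>X H1 H2 :: real. \<forall>a q :: nat.
            X \<ge> H2 \<and> H2 \<ge> H1 \<and> H1 \<ge> X powr (1/4) \<and> X powr (1/4) \<ge> 2 \<and> a \<ge> 1 \<and> q \<ge> 1 \<longrightarrow>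
            \<bar>win_avg (dk_sharp k X) X H1 a q - win_avg (dk_sharp k X) X H2 a q\<bar>
              \<le> C * (X powr (-1/100) + H2 / X * (ln X) ^ (k - 2))))"
proof (intro conjI allI impI exI)
  fix X H1 H2 :: real and a q :: nat
  assume "X \<ge> H2 \<and> H2 \<ge> H1 \<and> H1 \<ge> X powr (1/4) \<and> X powr (1/4) \<ge> 2 \<and> a \<ge> 1 \<and> q \<ge> 1"
  then show "\<bar>win_avg (Lambda_sharp X) X H1 a q - win_avg (Lambda_sharp X) X H2 a q\<bar>
      \<le> (4 * exp 106 + 27) * exp (- (ln X powr (1/10)))"
    by (intro Lambda_sharp_window_diff) auto
next
  fix k :: nat and X H1 H2 :: real and a q :: nat
  assume "k \<ge> 2" "X \<ge> H2 \<and> H2 \<ge> H1 \<and> H1 \<ge> X powr (1/4) \<and> X powr (1/4) \<ge> 2 \<and> a \<ge> 1 \<and> q \<ge> 1"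
  then show "\<bar>win_avg (dk_sharp k X) X H1 a q - win_avg (dk_sharp k X) X H2 a q\<bar>
      \<le> 4 * (20 * real k) ^ k * 4 ^ k * (X powr (-1/100) + H2 / X * (ln X) ^ (k - 2))"
    by (intro dk_sharp_window_diff) auto
qed

end
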